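(* Let $\mathcal{L}\subset\mathbb{S}^n$ be a regular hyperplane with non-zero ML degree. Then the ML degree of $\mathcal{L}$ equals the degree of the projection $$\gamma:\overline{\{(\Sigma,\Gamma,\ell)\in L^{-1}\times L^\perp\times\mathrm{Gr}(1,\mathbb{P}\mathbb{S}^n) \mid \Sigma\neq\Gamma,\ \Sigma\in\ell,\ \Gamma\in\ell\}}\to\mathcal{J},\quad (\Sigma,\Gamma,\ell)\mapsto\ell,$$ where $\mathcal{J}:=\overline{\{\ell\in\mathrm{Gr}(1,\mathbb{P}\mathbb{S}^n)\mid\exists(\Sigma,\Gamma)\in L^{-1}\times L^\perp:\Sigma\neq\Gamma,\ \Sigma\in\ell,\ \Gamma\in\ell\}}$.
   Context: $\mathbb{S}^n$ denotes the space of complex symmetric $n\times n$ matrices, $\mathbb{P}\mathbb{S}^n$ its projectivization, $\mathrm{Gr}(1,\mathbb{P}\mathbb{S}^n)$ the Grassmannian of lines. A linear subspace $\mathcal{L}$ is regular if it contains a full-rank matrix. $\mathcal{L}^\perp=\{\Sigma:\mathrm{tr}(K\Sigma)=0\ \forall K\in\mathcal{L}\}$. The reciprocal variety $\mathcal{L}^{-1}$ is the Zariski closure of the set of inverses of invertible matrices in $\mathcal{L}$. The ML degree of $\mathcal{L}$ is the number of matrices in $\mathcal{L}^{-1}\cap(\mathcal{L}^\perp+S)$ for generic $S\in\mathbb{S}^n$. $L^{-1},L^\perp$ are the projectivizations. *)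

theory Defs
  imports "HOL-Analysis.Analysis"
begin

type_synonym 'n cmat = "complex^'n^'n"

inductive_set polyfuns :: "('x \<Rightarrow> complex) set \<Rightarrow> ('x \<Rightarrow> complex) set"
  for coords :: "('x \<Rightarrow> complex) set" where
  pf_const: "(\<lambda>_. c) \<in> polyfuns coords"
| pf_coord: "f \<in> coords \<Longrightarrow> f \<in> polyfuns coords"
| pf_add: "f \<in> polyfuns coords \<Longrightarrow> g \<in> polyfuns coords \<Longrightarrow> (\<lambda>x. f x + g x) \<in> polyfuns coords"
| pf_mult: "f \<in> polyfuns coords \<Longrightarrow> g \<in> polyfuns coords \<Longrightarrow> (\<lambda>x. f x * g x) \<in> polyfuns coords"

definition zclosed :: "('x \<Rightarrow> complex) set \<Rightarrow> 'x set \<Rightarrow> bool" where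
  "zclosed coords C \<longleftrightarrow> (\<exists>F \<subseteq> polyfuns coords. C = {x. \<forall>f\<in>F. f x = 0})"

definition zclosure :: "('x \<Rightarrow> complex) set \<Rightarrow> 'x set \<Rightarrow> 'x set \<Rightarrow> 'x set" where
  "zclosure coords Y A = Y \<inter> \<Inter>{C. zclosed coords C \<and> A \<subseteq> C}"

definition zopen_in :: "('x \<Rightarrow> complex) set \<Rightarrow> 'x set \<Rightarrow> 'x set \<Rightarrow> bool" where
  "zopen_in coords Y U \<longleftrightarrow> (\<exists>C. zclosed coords C \<and> U = Y - C)"

definition mcoords :: "(('n::finite) cmat \<Rightarrow> complex) set" where
  "mcoords = {\<lambda>A. A $ i $ j | i j. True}"

definition pcoords :: "((('n::finite) cmat \<times> ('n::finite) cmat) \<Rightarrow> complex) set" where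
  "pcoords = {\<lambda>(u,v). u $ i $ j | i j. True} \<union> {\<lambda>(u,v). v $ i $ j | i j. True}"

definition tcoords :: "((('n::finite) cmat \<times> ('n::finite) cmat \<times> (('n::finite) cmat \<times> ('n::finite) cmat)) \<Rightarrow> complex) set" where
  "tcoords = {\<lambda>(a,b,u,v). a $ i $ j | i j. True} \<union> {\<lambda>(a,b,u,v). b $ i $ j | i j. True}
           \<union> {\<lambda>(a,b,u,v). u $ i $ j | i j. True} \<union> {\<lambda>(a,b,u,v). v $ i $ j | i j. True}"

definition csc :: "complex \<Rightarrow> ('n::finite) cmat \<Rightarrow> ('n::finite) cmat" where
  "csc c A = (\<chi> i j. c * A $ i $ j)"

definition Sym :: "('n::finite) cmat set" where
  "Sym = {A. transpose A = A}"

definition is_hyperplane :: "('n::finite) cmat set \<Rightarrow> bool" where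
  "is_hyperplane L \<longleftrightarrow> (\<exists>\<phi> :: ('n::finite) cmat \<Rightarrow> complex.
      (\<forall>A\<in>Sym. \<forall>B\<in>Sym. \<phi> (A + B) = \<phi> A + \<phi> B) \<and>
      (\<forall>c. \<forall>A\<in>Sym. \<phi> (csc c A) = c * \<phi> A) \<and>
      (\<exists>A\<in>Sym. \<phi> A \<noteq> 0) \<and>
      L = {K\<in>Sym. \<phi> K = 0})"

definition regular :: "('n::finite) cmat set \<Rightarrow> bool" where
  "regular L \<longleftrightarrow> (\<exists>K\<in>L. det K \<noteq> 0)"

definition perp :: "('n::finite) cmat set \<Rightarrow> ('n::finite) cmat set" where
  "perp L = {S\<in>Sym. \<forall>K\<in>L. trace (K ** S) = 0}"

definition reciprocal :: "('n::finite) cmat set \<Rightarrow> ('n::finite) cmat set" where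
  "reciprocal L = zclosure mcoords Sym {matrix_inv K | K. K \<in> L \<and> invertible K}"

definition ml_degree :: "('n::finite) cmat set \<Rightarrow> nat \<Rightarrow> bool" where
  "ml_degree L d \<longleftrightarrow> (\<exists>U. zopen_in mcoords Sym U \<and> U \<noteq> {} \<and>
     (\<forall>S\<in>U. finite (reciprocal L \<inter> {G + S | G. G \<in> perp L}) \<and>
             card (reciprocal L \<inter> {G + S | G. G \<in> perp L}) = d))"

text \<open>Point of P S^n represented by a non-zero A: the complex line through A.\<close>
definition ppoint :: "('n::finite) cmat \<Rightarrow> ('n::finite) cmat set" where
  "ppoint A = {csc c A | c. True}"

definition indep2 :: "('n::finite) cmat \<Rightarrow> ('n::finite) cmat \<Rightarrow> bool" where
  "indep2 u v \<longleftrightarrow> (\<forall>a b. csc a u + csc b v = 0 \<longrightarrow> a = 0 \<and> b = 0)"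

text \<open>Representatives of points of Gr(1, P S^n): independent pairs of symmetric matrices.\<close>
definition IndepPairs :: "(('n::finite) cmat \<times> ('n::finite) cmat) set" where
  "IndepPairs = {(u,v). u \<in> Sym \<and> v \<in> Sym \<and> indep2 u v}"

definition on_line :: "('n::finite) cmat \<Rightarrow> ('n::finite) cmat \<times> ('n::finite) cmat \<Rightarrow> bool" where
  "on_line A l \<longleftrightarrow> (\<exists>a b. A = csc a (fst l) + csc b (snd l))"

definition Amb3 :: "(('n::finite) cmat \<times> ('n::finite) cmat \<times> (('n::finite) cmat \<times> ('n::finite) cmat)) set" where
  "Amb3 = {(S,G,l). S \<in> Sym - {0} \<and> G \<in> Sym - {0} \<and> l \<in> IndepPairs}"

definition incidence0 :: "('n::finite) cmat set \<Rightarrow> (('n::finite) cmat \<times> ('n::finite) cmat \<times> (('n::finite) cmat \<times> ('n::finite) cmat)) set" where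
  "incidence0 L = {(S,G,l). S \<in> reciprocal L - {0} \<and> G \<in> perp L - {0} \<and> l \<in> IndepPairs \<and>
                    ppoint S \<noteq> ppoint G \<and> on_line S l \<and> on_line G l}"

text \<open>The closed incidence variety (domain of gamma), lifted to representatives.\<close>
definition incidence :: "('n::finite) cmat set \<Rightarrow> (('n::finite) cmat \<times> ('n::finite) cmat \<times> (('n::finite) cmat \<times> ('n::finite) cmat)) set" where
  "incidence L = zclosure tcoords Amb3 (incidence0 L)"

text \<open>The variety J, lifted to representatives.\<close>
definition Jvar :: "('n::finite) cmat set \<Rightarrow> (('n::finite) cmat \<times> ('n::finite) cmat) set" where
  "Jvar L = zclosure pcoords IndepPairs {l. \<exists>S G. (S,G,l) \<in> incidence0 L}"

text \<open>Fibre of gamma over the line l, as a set of pairs of projective points.\<close>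
definition gamma_fibre :: "('n::finite) cmat set \<Rightarrow> ('n::finite) cmat \<times> ('n::finite) cmat \<Rightarrow> (('n::finite) cmat set \<times> ('n::finite) cmat set) set" where
  "gamma_fibre L l = {(ppoint S, ppoint G) | S G. (S,G,l) \<in> incidence L}"

definition gamma_degree :: "('n::finite) cmat set \<Rightarrow> nat \<Rightarrow> bool" where
  "gamma_degree L d \<longleftrightarrow> (\<exists>U. zopen_in pcoords (Jvar L) U \<and>
      zclosure pcoords IndepPairs U = Jvar L \<and>
      (\<forall>l\<in>U. finite (gamma_fibre L l) \<and> card (gamma_fibre L l) = d))"

end

(*
  Write L as the hyperplane orthogonal to a symmetric matrix Gamma, so that L^perp = C Gamma.
  Every line through a point of L^-1 and a different point of L^perp passes through Gamma.  For
  a point S of such a line l that is not a multiple of Gamma, the affine line L^perp + S contains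
  exactly one representative of each point of l other than Gamma; since L^-1 is a cone, the
  fibre of gamma over l is in bijection with L^-1 meet (L^perp + S).  With S chosen
  polynomially in l, this set has ML-degree many points for generic l.

  Two points need care.  Taking the closure of the incidence correspondence could add points
  with Sigma = Gamma to the fibres; this is excluded for generic l by a polynomial built from
  the lowest-order term, along the pencils sigma W + tau Gamma, of an equation of the cone
  L^-1.  And genericity has to be measured inside J: J is the set of all lines through Gamma,
  which is polynomially parametrised by an affine space and hence irreducible.
*)

theory Submission
  imports Defs
begin

section \<open>Polynomial functions and the Zariski topology\<close>

lemma polyfuns_sum:
  assumes "finite A" "\<And>i. i \<in> A \<Longrightarrow> g i \<in> polyfuns C"
  shows "(\<lambda>x. \<Sum>i\<in>A. g i x) \<in> polyfuns C"
  using assms by (induction A rule: finite_induct) (auto intro: pf_const pf_add)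

lemma polyfuns_power: "g \<in> polyfuns C \<Longrightarrow> (\<lambda>x. g x ^ n) \<in> polyfuns C"
  by (induction n) (auto intro: pf_const pf_mult)

lemma polyfuns_diff: "f \<in> polyfuns C \<Longrightarrow> g \<in> polyfuns C \<Longrightarrow> (\<lambda>x. f x - g x) \<in> polyfuns C"
  using pf_add[OF _ pf_mult[OF pf_const[of "-1"]], of f C g] by simp

lemma polyfuns_compose:
  assumes "f \<in> polyfuns C" "\<And>c. c \<in> C \<Longrightarrow> (\<lambda>x. c (h x)) \<in> polyfuns C'"
  shows "(\<lambda>x. f (h x)) \<in> polyfuns C'"
  using assms(1) by induction (simp_all add: polyfuns.pf_const polyfuns.pf_add polyfuns.pf_mult assms(2))

lemma zclosure_iff:
  "x \<in> zclosure C Y A \<longleftrightarrow> x \<in> Y \<and> (\<forall>p\<in>polyfuns C. (\<forall>a\<in>A. p a = 0) \<longrightarrow> p x = 0)"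
proof -
  have "(\<forall>D. zclosed C D \<and> A \<subseteq> D \<longrightarrow> x \<in> D) \<longleftrightarrow> (\<forall>p\<in>polyfuns C. (\<forall>a\<in>A. p a = 0) \<longrightarrow> p x = 0)"
  proof (intro iffI ballI impI allI)
    fix p assume "\<forall>D. zclosed C D \<and> A \<subseteq> D \<longrightarrow> x \<in> D" "p \<in> polyfuns C" "\<forall>a\<in>A. p a = 0"
    moreover have "zclosed C {x. \<forall>f\<in>{p}. f x = 0}"
      using \<open>p \<in> polyfuns C\<close> unfolding zclosed_def by blast
    ultimately show "p x = 0" by auto
  qed (auto simp: zclosed_def)
  then show ?thesis by (auto simp: zclosure_def)
qed

lemma zclosure_subset: "zclosure C Y A \<subseteq> Y"
  by (simp add: zclosure_def)

lemma zclosure_superset: "A \<subseteq> Y \<Longrightarrow> A \<subseteq> zclosure C Y A"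
  by (auto simp: zclosure_iff)

lemma zclosure_vanishing:
  "x \<in> zclosure C Y A \<Longrightarrow> p \<in> polyfuns C \<Longrightarrow> (\<And>a. a \<in> A \<Longrightarrow> p a = 0) \<Longrightarrow> p x = 0"
  by (auto simp: zclosure_iff)

lemma zclosure_minimal: "B \<subseteq> zclosure C Y A \<Longrightarrow> zclosure C Y B \<subseteq> zclosure C Y A"
  unfolding subset_iff zclosure_iff by blast

lemma zopen_in_nonvanishing:
  assumes "zopen_in C Y U" "x \<in> U"
  shows "\<exists>f\<in>polyfuns C. f x \<noteq> 0 \<and> (\<forall>y\<in>Y. f y \<noteq> 0 \<longrightarrow> y \<in> U)"
proof -
  obtain F where F: "F \<subseteq> polyfuns C" "U = Y - {y. \<forall>f\<in>F. f y = 0}"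
    using assms(1) unfolding zopen_in_def zclosed_def by blast
  then obtain f where "f \<in> F" "f x \<noteq> 0" using assms(2) by blast
  then show ?thesis using F by blast
qed

lemma polyfuns_along_curve:
  assumes "f \<in> polyfuns C" "\<And>c. c \<in> C \<Longrightarrow> \<exists>P. \<forall>z. c (h z) = poly P z"
  shows "\<exists>P. \<forall>z. f (h z) = poly P z"
  using assms(1)
proof induction
  case (pf_const c) then show ?case by (intro exI[of _ "[:c:]"]) simp
next
  case (pf_coord f) then show ?case using assms(2) by blast
next
  case (pf_add f g)
  then obtain P Q where "\<forall>z. f (h z) = poly P z" "\<forall>z. g (h z) = poly Q z" by blast
  then show ?case by (intro exI[of _ "P + Q"]) simp
next
  case (pf_mult f g)
  then obtain P Q where "\<forall>z. f (h z) = poly P z" "\<forall>z. g (h z) = poly Q z" by blast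
  then show ?case by (intro exI[of _ "P * Q"]) simp
qed

text \<open>The restrictions to the curve are univariate polynomials, and \<open>\<complex>[z]\<close> is a domain.\<close>
lemma polyfuns_along_curve_nonzero_product:
  assumes "f \<in> polyfuns C" "g \<in> polyfuns C" "\<And>c. c \<in> C \<Longrightarrow> \<exists>P. \<forall>z. c (h z) = poly P z"
    and "f (h a) \<noteq> 0" "g (h b) \<noteq> 0"
  shows "\<exists>z. f (h z) \<noteq> 0 \<and> g (h z) \<noteq> 0"
proof -
  obtain P Q where P: "\<forall>z. f (h z) = poly P z" and Q: "\<forall>z. g (h z) = poly Q z"
    using polyfuns_along_curve assms(1-3) by metis
  have "P * Q \<noteq> 0" using P Q assms(4,5) by auto
  then obtain z where "poly (P * Q) z \<noteq> 0" using poly_all_0_iff_0 by blast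
  then show ?thesis using P Q by auto
qed

lemma poly_eq_sum_upto:
  fixes p :: "'a::comm_semiring_1 poly"
  assumes "degree p \<le> D"
  shows "poly p x = (\<Sum>k\<le>D. coeff p k * x ^ k)"
  unfolding poly_altdef using assms
  by (intro sum.mono_neutral_left) (auto simp: coeff_eq_0)

definition poly_family :: "('x \<Rightarrow> complex) set \<Rightarrow> ('x \<Rightarrow> complex poly) \<Rightarrow> bool" where
  "poly_family C P \<longleftrightarrow> (\<forall>k. (\<lambda>x. coeff (P x) k) \<in> polyfuns C) \<and> (\<exists>D. \<forall>x. degree (P x) \<le> D)"

lemma poly_family_const: "poly_family C (\<lambda>_. [:c:])"
  by (auto simp: poly_family_def pf_const)

lemma poly_family_linear:
  assumes "a \<in> polyfuns C" "b \<in> polyfuns C" shows "poly_family C (\<lambda>x. [:a x, b x:])"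
proof -
  have "(\<lambda>x. coeff [:a x, b x:] k) \<in> polyfuns C" for k
  proof (cases k)
    case (Suc m) then show ?thesis using assms by (cases m) (auto intro: pf_const)
  qed (use assms in simp)
  moreover have "degree [:a x, b x:] \<le> 1" for x by simp
  ultimately show ?thesis unfolding poly_family_def by blast
qed

lemma poly_family_add:
  assumes "poly_family C P" "poly_family C Q" shows "poly_family C (\<lambda>x. P x + Q x)"
proof -
  obtain D E where "\<forall>x. degree (P x) \<le> D" "\<forall>x. degree (Q x) \<le> E" using assms by (auto simp: poly_family_def)
  then have "\<forall>x. degree (P x + Q x) \<le> max D E" by (meson degree_add_le le_max_iff_disj)
  moreover have "(\<lambda>x. coeff (P x + Q x) k) \<in> polyfuns C" for k
    using pf_add[of "\<lambda>x. coeff (P x) k" C "\<lambda>x. coeff (Q x) k"] assms by (simp add: poly_family_def)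
  ultimately show ?thesis unfolding poly_family_def by blast
qed

lemma poly_family_mult:
  assumes "poly_family C P" "poly_family C Q" shows "poly_family C (\<lambda>x. P x * Q x)"
proof -
  obtain D E where "\<forall>x. degree (P x) \<le> D" "\<forall>x. degree (Q x) \<le> E" using assms by (auto simp: poly_family_def)
  then have "\<forall>x. degree (P x * Q x) \<le> D + E" by (meson add_mono degree_mult_le order.trans)
  moreover have "(\<lambda>x. coeff (P x * Q x) k) \<in> polyfuns C" for k
    unfolding coeff_mult using assms by (intro polyfuns_sum pf_mult) (auto simp: poly_family_def)
  ultimately show ?thesis unfolding poly_family_def by blast
qed

lemma polyfuns_affine_expansion:
  fixes Ln :: "'x \<Rightarrow> complex \<Rightarrow> 'y"
  assumes "f \<in> polyfuns C'"
    and "\<And>c. c \<in> C' \<Longrightarrow> \<exists>a b. a \<in> polyfuns C \<and> b \<in> polyfuns C \<and> (\<forall>x s. c (Ln x s) = a x + b x * s)"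
  shows "\<exists>P. poly_family C P \<and> (\<forall>x s. f (Ln x s) = poly (P x) s)"
  using assms(1)
proof induction
  case (pf_const c)
  show ?case by (intro exI[of _ "\<lambda>_. [:c:]"]) (simp add: poly_family_const)
next
  case (pf_coord c)
  then obtain a b where "a \<in> polyfuns C" "b \<in> polyfuns C" "\<forall>x s. c (Ln x s) = a x + b x * s"
    using assms(2) by blast
  then show ?case by (intro exI[of _ "\<lambda>x. [:a x, b x:]"]) (simp add: poly_family_linear algebra_simps)
next
  case (pf_add f g)
  then obtain P Q where "poly_family C P" "\<forall>x s. f (Ln x s) = poly (P x) s"
    "poly_family C Q" "\<forall>x s. g (Ln x s) = poly (Q x) s" by blast
  then show ?case by (intro exI[of _ "\<lambda>x. P x + Q x"]) (simp add: poly_family_add)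
next
  case (pf_mult f g)
  then obtain P Q where "poly_family C P" "\<forall>x s. f (Ln x s) = poly (P x) s"
    "poly_family C Q" "\<forall>x s. g (Ln x s) = poly (Q x) s" by blast
  then show ?case by (intro exI[of _ "\<lambda>x. P x * Q x"]) (simp add: poly_family_mult)
qed

section \<open>Symmetric matrices and hyperplanes\<close>

lemma csc_entry [simp]: "csc c A $ i $ j = c * A $ i $ j"
  by (simp add: csc_def)

lemma csc_1 [simp]: "csc 1 A = A" by (simp add: vec_eq_iff)
lemma csc_0 [simp]: "csc 0 A = 0" by (simp add: vec_eq_iff)
lemma csc_zero [simp]: "csc c 0 = 0" by (simp add: vec_eq_iff)
lemma csc_csc [simp]: "csc a (csc b A) = csc (a * b) A" by (simp add: vec_eq_iff)
lemma csc_add: "csc a (A + B) = csc a A + csc a B" by (simp add: vec_eq_iff algebra_simps)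

lemma cmat_eq_iff: "(A :: 'n::finite cmat) = B \<longleftrightarrow> (\<forall>i j. A $ i $ j = B $ i $ j)"
  by (simp add: vec_eq_iff)

lemma csc_eq_0_iff [simp]: "csc c A = 0 \<longleftrightarrow> c = 0 \<or> A = 0"
  by (auto simp: cmat_eq_iff)

lemma Sym_iff: "A \<in> Sym \<longleftrightarrow> (\<forall>i j. A $ i $ j = A $ j $ i)"
  by (auto simp: Sym_def transpose_def vec_eq_iff)

lemma Sym_add: "A \<in> Sym \<Longrightarrow> B \<in> Sym \<Longrightarrow> A + B \<in> Sym" by (simp add: Sym_iff)
lemma Sym_diff: "A \<in> Sym \<Longrightarrow> B \<in> Sym \<Longrightarrow> A - B \<in> Sym" by (simp add: Sym_iff)
lemma Sym_csc: "A \<in> Sym \<Longrightarrow> csc c A \<in> Sym" by (simp add: Sym_iff)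
lemma Sym_0: "0 \<in> Sym" by (simp add: Sym_iff)
lemma Sym_sum: "finite S \<Longrightarrow> (\<And>i. i \<in> S \<Longrightarrow> X i \<in> Sym) \<Longrightarrow> (\<Sum>i\<in>S. X i) \<in> Sym"
  by (induction S rule: finite_induct) (auto simp: Sym_0 Sym_add)

lemma mcoord: "(\<lambda>A. A $ i $ j) \<in> polyfuns mcoords"
  by (rule pf_coord) (auto simp: mcoords_def)

lemma pcoord_fst: "(\<lambda>l. fst l $ i $ j) \<in> polyfuns pcoords"
  by (rule pf_coord) (auto simp: pcoords_def split_def)

lemma pcoord_snd: "(\<lambda>l. snd l $ i $ j) \<in> polyfuns pcoords"
  by (rule pf_coord) (auto simp: pcoords_def split_def)

lemma tcoord_1: "(\<lambda>t. fst t $ i $ j) \<in> polyfuns tcoords"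
  by (rule pf_coord) (auto simp: tcoords_def split_def)

lemma tcoord_2: "(\<lambda>t. fst (snd t) $ i $ j) \<in> polyfuns tcoords"
  by (rule pf_coord) (auto simp: tcoords_def split_def)

lemma tcoord_3: "(\<lambda>t. fst (snd (snd t)) $ i $ j) \<in> polyfuns tcoords"
  by (rule pf_coord) (auto simp: tcoords_def split_def)

lemma tcoord_4: "(\<lambda>t. snd (snd (snd t)) $ i $ j) \<in> polyfuns tcoords"
  by (rule pf_coord) (auto simp: tcoords_def split_def)

lemma polyfuns_compose_mcoords:
  assumes "f \<in> polyfuns (mcoords :: ('n::finite cmat \<Rightarrow> complex) set)"
    and "\<And>i j. (\<lambda>x. h x $ i $ j) \<in> polyfuns C"
  shows "(\<lambda>x. f (h x)) \<in> polyfuns C"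
  using assms(1) by (rule polyfuns_compose) (auto simp: mcoords_def assms(2))

definition mscoords :: "('n::finite cmat \<times> complex \<Rightarrow> complex) set" where
  "mscoords = {\<lambda>x. fst x $ i $ j | i j. True} \<union> {snd}"

lemma polyfuns_expansion_outer:
  fixes f :: "'n::finite cmat \<Rightarrow> complex" and G :: "'n cmat"
  assumes "f \<in> polyfuns mcoords"
  shows "\<exists>Q. poly_family mscoords Q \<and> (\<forall>x \<sigma>. f (csc \<sigma> (fst x) + csc (snd x) G) = poly (Q x) \<sigma>)"
proof (rule polyfuns_affine_expansion[OF assms])
  fix c :: "'n cmat \<Rightarrow> complex" assume "c \<in> mcoords"
  then obtain i j where c: "c = (\<lambda>A. A $ i $ j)" by (auto simp: mcoords_def)
  have "snd \<in> polyfuns mscoords" "(\<lambda>x. fst x $ i $ j) \<in> polyfuns mscoords"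
    by (auto simp: mscoords_def intro: pf_coord)
  then have "(\<lambda>x. snd x * G $ i $ j) \<in> polyfuns mscoords" "(\<lambda>x. fst x $ i $ j) \<in> polyfuns mscoords"
    using pf_mult[OF _ pf_const] by auto
  then show "\<exists>a b. a \<in> polyfuns mscoords \<and> b \<in> polyfuns mscoords \<and>
    (\<forall>x \<sigma>. c (csc \<sigma> (fst x) + csc (snd x) G) = a x + b x * \<sigma>)"
    by (intro exI[of _ "\<lambda>x. snd x * G $ i $ j"] exI[of _ "\<lambda>x. fst x $ i $ j"]) (simp add: c algebra_simps)
qed

lemma polyfuns_mscoords_expansion:
  assumes "g \<in> polyfuns (mscoords :: ('n::finite cmat \<times> complex \<Rightarrow> complex) set)"
  shows "\<exists>R. poly_family mcoords R \<and> (\<forall>W \<tau>. g (W, \<tau>) = poly (R W) \<tau>)"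
proof (rule polyfuns_affine_expansion[of g mscoords mcoords Pair, OF assms])
  fix c :: "'n cmat \<times> complex \<Rightarrow> complex" assume "c \<in> mscoords"
  then consider (entry) i j where "c = (\<lambda>x. fst x $ i $ j)" | (scalar) "c = snd"
    by (auto simp: mscoords_def)
  then show "\<exists>a b. a \<in> polyfuns mcoords \<and> b \<in> polyfuns mcoords \<and> (\<forall>W \<tau>. c (W, \<tau>) = a W + b W * \<tau>)"
  proof cases
    case (entry i j) then show ?thesis
      by (intro exI[of _ "\<lambda>A. A $ i $ j"] exI[of _ "\<lambda>_. 0"]) (simp add: mcoord pf_const)
  next
    case scalar then show ?thesis
      by (intro exI[of _ "\<lambda>_. 0"] exI[of _ "\<lambda>_. 1"]) (simp add: pf_const)
  qed
qed

lemma polyfuns_pencil_expansion: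
  fixes f :: "'n::finite cmat \<Rightarrow> complex" and G :: "'n cmat"
  assumes "f \<in> polyfuns mcoords"
  shows "\<exists>D P. (\<forall>k j. (\<lambda>W. coeff (P k W) j) \<in> polyfuns mcoords) \<and> (\<forall>k W. D < k \<longrightarrow> P k W = 0) \<and>
     (\<forall>W \<sigma> \<tau>. f (csc \<sigma> W + csc \<tau> G) = (\<Sum>k\<le>D. poly (P k W) \<tau> * \<sigma> ^ k))"
proof -
  obtain Q D where Q: "\<And>k. (\<lambda>x. coeff (Q x) k) \<in> polyfuns mscoords" "\<And>x. degree (Q x) \<le> D"
    "\<And>x \<sigma>. f (csc \<sigma> (fst x) + csc (snd x) G) = poly (Q x) \<sigma>"
    using polyfuns_expansion_outer[OF assms, of G] unfolding poly_family_def by blast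
  have "\<forall>k. \<exists>R. poly_family mcoords R \<and> (\<forall>W \<tau>. coeff (Q (W, \<tau>)) k = poly (R W) \<tau>)"
    using polyfuns_mscoords_expansion[OF Q(1)] by blast
  then obtain R where R: "\<And>k j. (\<lambda>W. coeff (R k W) j) \<in> polyfuns mcoords"
    "\<And>k W \<tau>. coeff (Q (W, \<tau>)) k = poly (R k W) \<tau>"
    unfolding poly_family_def by metis
  define P where "P k W = (if k \<le> D then R k W else 0)" for k W
  have "(\<lambda>W. coeff (P k W) j) \<in> polyfuns mcoords" for k j
    by (cases "k \<le> D") (simp_all add: P_def R(1) pf_const)
  moreover have "f (csc \<sigma> W + csc \<tau> G) = (\<Sum>k\<le>D. poly (P k W) \<tau> * \<sigma> ^ k)" for W \<sigma> \<tau>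
    using Q(3)[of \<sigma> "(W, \<tau>)"] by (simp add: poly_eq_sum_upto[OF Q(2)] R(2) P_def)
  ultimately show ?thesis by (intro exI[of _ D] exI[of _ P]) (simp add: P_def)
qed

lemma trace_mult_eq: "trace ((K :: 'n::finite cmat) ** S) = (\<Sum>i\<in>UNIV. \<Sum>j\<in>UNIV. K $ i $ j * S $ j $ i)"
  by (simp add: trace_def matrix_matrix_mult_def)

lemma trace_csc_left: "trace (csc c (K :: 'n::finite cmat) ** S) = c * trace (K ** S)"
  by (simp add: trace_mult_eq sum_distrib_left mult.assoc)

lemma trace_csc_right: "trace ((K :: 'n::finite cmat) ** csc c S) = c * trace (K ** S)"
  by (simp add: trace_mult_eq sum_distrib_left algebra_simps)

lemma trace_diff_left: "trace (((K :: 'n::finite cmat) - K') ** S) = trace (K ** S) - trace (K' ** S)"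
  by (simp add: trace_mult_eq sum_subtractf left_diff_distrib)

lemma trace_diff_right: "trace ((K :: 'n::finite cmat) ** (S - S')) = trace (K ** S) - trace (K ** S')"
  by (simp add: trace_mult_eq sum_subtractf right_diff_distrib)

lemma sum_pair_delta:
  fixes f :: "'n::finite \<Rightarrow> 'n \<Rightarrow> complex"
  shows "(\<Sum>a\<in>UNIV. \<Sum>b\<in>UNIV. (if a = i \<and> b = j then c else 0) * f a b) = c * f i j"
proof -
  have "(\<Sum>b\<in>UNIV. (if a = i \<and> b = j then c else 0) * f a b) = (if a = i then c * f a j else 0)" for a
    by (cases "a = i") (simp_all add: if_distrib[of "\<lambda>x. x * _"] cong: if_cong)
  then show ?thesis by simp
qed

definition sym_unit :: "'n::finite \<Rightarrow> 'n \<Rightarrow> 'n cmat" where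
  "sym_unit i j = (\<chi> a b. (if a = i \<and> b = j then 1/2 else 0) + (if a = j \<and> b = i then 1/2 else 0))"

lemma sym_unit_entry:
  "sym_unit i j $ a $ b = (if a = i \<and> b = j then 1/2 else 0) + (if a = j \<and> b = i then 1/2 else 0)"
  by (simp add: sym_unit_def)

lemma sym_unit_Sym: "sym_unit i j \<in> Sym"
  unfolding Sym_iff sym_unit_entry by (simp add: add.commute conj_commute)

lemma sym_unit_swap: "sym_unit i j = sym_unit j i"
  unfolding cmat_eq_iff sym_unit_entry by (simp add: add.commute)

lemma trace_sym_unit: "Y \<in> Sym \<Longrightarrow> trace (sym_unit i j ** Y) = Y $ i $ j"
  by (simp add: trace_mult_eq sym_unit_entry distrib_right sum.distrib sum_pair_delta Sym_iff)

lemma Sym_eq_sum_sym_unit: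
  assumes "K \<in> Sym"
  shows "K = (\<Sum>i\<in>UNIV. \<Sum>j\<in>UNIV. csc (K $ i $ j) (sym_unit i j))"
proof -
  have "(\<Sum>i\<in>UNIV. \<Sum>j\<in>UNIV. K $ i $ j * sym_unit i j $ a $ b) = trace (sym_unit a b ** K)" for a b
    unfolding trace_mult_eq using assms by (intro sum.cong refl) (simp add: Sym_iff sym_unit_entry add.commute conj_commute)
  then show ?thesis using assms by (simp add: cmat_eq_iff sum_component trace_sym_unit)
qed

text \<open>The representing matrix is \<open>\<Gamma>\<^sub>i\<^sub>j = \<phi> (sym_unit i j)\<close>.\<close>
lemma Sym_functional_eq_trace:
  fixes \<phi> :: "'n::finite cmat \<Rightarrow> complex"
  assumes add: "\<forall>A\<in>Sym. \<forall>B\<in>Sym. \<phi> (A + B) = \<phi> A + \<phi> B"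
    and scale: "\<forall>c. \<forall>A\<in>Sym. \<phi> (csc c A) = c * \<phi> A"
  shows "\<exists>\<Gamma>\<in>Sym. \<forall>K\<in>Sym. \<phi> K = trace (K ** \<Gamma>)"
proof
  define \<Gamma> :: "'n cmat" where "\<Gamma> = (\<chi> i j. \<phi> (sym_unit i j))"
  show "\<Gamma> \<in> Sym" by (auto simp: Sym_iff \<Gamma>_def sym_unit_swap)
  have \<phi>_sum: "\<phi> (\<Sum>i\<in>S. X i) = (\<Sum>i\<in>S. \<phi> (X i))" if "finite S" "\<And>i. i \<in> S \<Longrightarrow> X i \<in> Sym" for S X
    using that
  proof (induction S rule: finite_induct)
    case empty then show ?case using scale Sym_0 by (metis csc_0 mult_zero_left sum.empty)
  next
    case (insert a S) then show ?case using add by (simp add: Sym_sum)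
  qed
  show "\<forall>K\<in>Sym. \<phi> K = trace (K ** \<Gamma>)"
  proof
    fix K :: "'n cmat" assume K: "K \<in> Sym"
    have "\<phi> K = \<phi> (\<Sum>i\<in>UNIV. \<Sum>j\<in>UNIV. csc (K $ i $ j) (sym_unit i j))"
      using Sym_eq_sum_sym_unit[OF K] by simp
    also have "\<dots> = (\<Sum>i\<in>UNIV. \<Sum>j\<in>UNIV. K $ i $ j * \<phi> (sym_unit i j))"
      by (simp add: \<phi>_sum Sym_sum Sym_csc sym_unit_Sym scale)
    also have "\<dots> = trace (K ** \<Gamma>)"
      by (simp add: trace_mult_eq \<Gamma>_def sym_unit_swap)
    finally show "\<phi> K = trace (K ** \<Gamma>)" .
  qed
qed

lemma hyperplane_normal:
  fixes L :: "'n::finite cmat set"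
  assumes "is_hyperplane L"
  shows "\<exists>\<Gamma>. \<Gamma> \<in> Sym \<and> \<Gamma> \<noteq> 0 \<and> L = {K\<in>Sym. trace (K ** \<Gamma>) = 0}"
proof -
  obtain \<phi> :: "'n cmat \<Rightarrow> complex" where
    add: "\<forall>A\<in>Sym. \<forall>B\<in>Sym. \<phi> (A + B) = \<phi> A + \<phi> B" and
    scale: "\<forall>c. \<forall>A\<in>Sym. \<phi> (csc c A) = c * \<phi> A" and
    nz: "\<exists>A\<in>Sym. \<phi> A \<noteq> 0" and L: "L = {K\<in>Sym. \<phi> K = 0}"
    using assms unfolding is_hyperplane_def by blast
  obtain \<Gamma> where \<Gamma>: "\<Gamma> \<in> Sym" "\<forall>K\<in>Sym. \<phi> K = trace (K ** \<Gamma>)"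
    using Sym_functional_eq_trace[OF add scale] by blast
  have "\<Gamma> \<noteq> 0" using nz \<Gamma>(2) by (auto simp: trace_mult_eq)
  then show ?thesis using \<Gamma> L by auto
qed

lemma perp_trace_hyperplane:
  assumes \<Gamma>: "\<Gamma> \<in> Sym" "\<Gamma> \<noteq> 0"
  shows "perp {K\<in>Sym. trace (K ** \<Gamma>) = 0} = {csc c \<Gamma> | c. True}"
proof (intro equalityI subsetI)
  fix S assume "S \<in> {csc c \<Gamma> | c. True}"
  then show "S \<in> perp {K\<in>Sym. trace (K ** \<Gamma>) = 0}"
    using \<Gamma> by (auto simp: perp_def Sym_csc trace_csc_right)
next
  fix S assume S: "S \<in> perp {K\<in>Sym. trace (K ** \<Gamma>) = 0}"
  obtain a b where ab: "\<Gamma> $ a $ b \<noteq> 0" using \<Gamma>(2) by (auto simp: cmat_eq_iff)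
  define A where "A = sym_unit a b"
  have A: "A \<in> Sym" "trace (A ** \<Gamma>) \<noteq> 0" using ab \<Gamma>(1) by (simp_all add: A_def sym_unit_Sym trace_sym_unit)
  define c where "c = trace (A ** S) / trace (A ** \<Gamma>)"
  define Y where "Y = S - csc c \<Gamma>"
  have Y: "Y \<in> Sym" using S \<Gamma>(1) by (simp add: Y_def perp_def Sym_diff Sym_csc)
  have Y_orth: "trace (K ** Y) = 0" if K: "K \<in> Sym" for K
  proof -
    \<comment> \<open>project \<open>K\<close> into the hyperplane along \<open>A\<close>\<close>
    define t where "t = trace (K ** \<Gamma>) / trace (A ** \<Gamma>)"
    have "K - csc t A \<in> {K\<in>Sym. trace (K ** \<Gamma>) = 0}"
      using K A by (simp add: Sym_diff Sym_csc trace_diff_left trace_csc_left t_def)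
    then have "trace ((K - csc t A) ** S) = 0" using S by (auto simp: perp_def)
    then have "trace (K ** S) = t * trace (A ** S)" by (simp add: trace_diff_left trace_csc_left)
    also have "\<dots> = c * trace (K ** \<Gamma>)" using A(2) by (simp add: t_def c_def)
    finally show ?thesis by (simp add: Y_def trace_diff_right trace_csc_right)
  qed
  have "Y $ i $ j = 0" for i j
    using Y_orth[OF sym_unit_Sym, of i j] trace_sym_unit[OF Y, of i j] by simp
  then have "Y = 0" by (simp add: cmat_eq_iff)
  then show "S \<in> {csc c \<Gamma> | c. True}" by (auto simp: Y_def)
qed

section \<open>Lines of symmetric matrices\<close>

definition entry :: "'n::finite cmat \<Rightarrow> 'n \<times> 'n \<Rightarrow> complex" where
  "entry X \<alpha> = X $ fst \<alpha> $ snd \<alpha>"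

definition minor2 :: "'n::finite cmat \<Rightarrow> 'n cmat \<Rightarrow> 'n \<times> 'n \<Rightarrow> 'n \<times> 'n \<Rightarrow> complex" where
  "minor2 u v \<alpha> \<beta> = entry u \<alpha> * entry v \<beta> - entry u \<beta> * entry v \<alpha>"

definition minor3 :: "'n::finite cmat \<Rightarrow> 'n cmat \<Rightarrow> 'n cmat \<Rightarrow> 'n \<times> 'n \<Rightarrow> 'n \<times> 'n \<Rightarrow> 'n \<times> 'n \<Rightarrow> complex" where
  "minor3 u v X \<alpha> \<beta> \<gamma> =
     entry X \<gamma> * minor2 u v \<alpha> \<beta> - entry X \<beta> * minor2 u v \<alpha> \<gamma> + entry X \<alpha> * minor2 u v \<beta> \<gamma>"

lemma entry_add [simp]: "entry (A + B) \<alpha> = entry A \<alpha> + entry B \<alpha>" by (simp add: entry_def)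
lemma entry_csc [simp]: "entry (csc c A) \<alpha> = c * entry A \<alpha>" by (simp add: entry_def)
lemma entry_zero [simp]: "entry 0 \<alpha> = 0" by (simp add: entry_def)

lemma cmat_eq_entry_iff: "(A :: 'n::finite cmat) = B \<longleftrightarrow> (\<forall>\<alpha>. entry A \<alpha> = entry B \<alpha>)"
  by (auto simp: entry_def cmat_eq_iff)

lemma minor2_nonzero_indep2:
  assumes "minor2 u v \<alpha> \<beta> \<noteq> 0" shows "indep2 u v"
  unfolding indep2_def
proof (intro allI impI)
  fix a b assume ab: "csc a u + csc b v = 0"
  have e: "a * entry u \<gamma> + b * entry v \<gamma> = 0" for \<gamma>
    using arg_cong[OF ab, of "\<lambda>X. entry X \<gamma>"] by simp
  have "a * minor2 u v \<alpha> \<beta> = entry v \<beta> * (a * entry u \<alpha> + b * entry v \<alpha>) - entry v \<alpha> * (a * entry u \<beta> + b * entry v \<beta>)"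
    by (simp add: minor2_def algebra_simps)
  moreover have "b * minor2 u v \<alpha> \<beta> = entry u \<alpha> * (a * entry u \<beta> + b * entry v \<beta>) - entry u \<beta> * (a * entry u \<alpha> + b * entry v \<alpha>)"
    by (simp add: minor2_def algebra_simps)
  ultimately have "a * minor2 u v \<alpha> \<beta> = 0" "b * minor2 u v \<alpha> \<beta> = 0" by (simp_all only: e) simp_all
  then show "a = 0 \<and> b = 0" using assms by simp
qed

lemma indep2_minor2_nonzero:
  assumes "indep2 u v" shows "\<exists>\<alpha> \<beta>. minor2 u v \<alpha> \<beta> \<noteq> 0"
proof (rule ccontr)
  assume "\<not> ?thesis"
  then have minors: "\<And>\<alpha> \<beta>. minor2 u v \<alpha> \<beta> = 0" by blast
  have "u \<noteq> 0"
  proof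
    assume "u = 0"
    then have "csc 1 u + csc 0 v = 0" by simp
    then show False using assms unfolding indep2_def by fastforce
  qed
  then obtain \<alpha> where \<alpha>: "entry u \<alpha> \<noteq> 0" by (auto simp: cmat_eq_entry_iff)
  have "entry v \<alpha> * entry u \<gamma> + - entry u \<alpha> * entry v \<gamma> = 0" for \<gamma>
    using minors[of \<gamma> \<alpha>] by (simp add: minor2_def algebra_simps)
  then have "csc (entry v \<alpha>) u + csc (- entry u \<alpha>) v = 0" by (simp add: cmat_eq_entry_iff)
  then show False using assms \<alpha> unfolding indep2_def by fastforce
qed

lemma on_line_iff_minor3:
  assumes "indep2 u v"
  shows "on_line X (u, v) \<longleftrightarrow> (\<forall>\<alpha> \<beta> \<gamma>. minor3 u v X \<alpha> \<beta> \<gamma> = 0)"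
proof
  assume "on_line X (u, v)"
  then obtain a b where "X = csc a u + csc b v" by (auto simp: on_line_def)
  then show "\<forall>\<alpha> \<beta> \<gamma>. minor3 u v X \<alpha> \<beta> \<gamma> = 0"
    by (simp add: minor3_def minor2_def algebra_simps)
next
  assume minors: "\<forall>\<alpha> \<beta> \<gamma>. minor3 u v X \<alpha> \<beta> \<gamma> = 0"
  obtain \<alpha> \<beta> where "minor2 u v \<alpha> \<beta> \<noteq> 0" using indep2_minor2_nonzero[OF assms] by blast
  \<comment> \<open>Cramer's rule on the entries \<open>\<alpha>, \<beta>\<close>\<close>
  define D where "D = minor2 u v \<alpha> \<beta>"
  define a where "a = (entry X \<alpha> * entry v \<beta> - entry X \<beta> * entry v \<alpha>) / D"
  define b where "b = (entry u \<alpha> * entry X \<beta> - entry u \<beta> * entry X \<alpha>) / D"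
  have D: "D \<noteq> 0" by (simp add: D_def \<open>minor2 u v \<alpha> \<beta> \<noteq> 0\<close>)
  have aD: "a * D = entry X \<alpha> * entry v \<beta> - entry X \<beta> * entry v \<alpha>" using D by (simp add: a_def)
  have bD: "b * D = entry u \<alpha> * entry X \<beta> - entry u \<beta> * entry X \<alpha>" using D by (simp add: b_def)
  have "entry X \<gamma> = a * entry u \<gamma> + b * entry v \<gamma>" for \<gamma>
  proof -
    have "entry X \<gamma> * D = entry X \<beta> * minor2 u v \<alpha> \<gamma> - entry X \<alpha> * minor2 u v \<beta> \<gamma>"
      using minors[rule_format, of \<alpha> \<beta> \<gamma>] by (simp add: minor3_def D_def algebra_simps)
    also have "\<dots> = (a * D) * entry u \<gamma> + (b * D) * entry v \<gamma>"
      unfolding aD bD by (simp add: minor2_def algebra_simps)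
    finally have "entry X \<gamma> * D = (a * entry u \<gamma> + b * entry v \<gamma>) * D" by (simp add: algebra_simps)
    then show ?thesis using D by simp
  qed
  then have "X = csc a u + csc b v" by (simp add: cmat_eq_entry_iff)
  then show "on_line X (u, v)" by (auto simp: on_line_def)
qed

lemma csc_mult: "csc a A ** csc b B = csc (a * b) (A ** B)"
  by (simp add: cmat_eq_iff matrix_matrix_mult_def sum_distrib_left algebra_simps)

lemma matrix_inv_eqI:
  assumes "(K :: 'n::finite cmat) ** B = mat 1" "B ** K = mat 1"
  shows "matrix_inv K = B"
  unfolding matrix_inv_def
proof (rule some_equality)
  show "K ** B = mat 1 \<and> B ** K = mat 1" using assms by simp
next
  fix A' assume A': "K ** A' = mat 1 \<and> A' ** K = mat 1"
  have "A' = A' ** (K ** B)" using assms by simp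
  also have "\<dots> = (A' ** K) ** B" by (simp add: matrix_mul_assoc)
  also have "\<dots> = B" using A' by simp
  finally show "A' = B" .
qed

lemma invertible_csc_matrix_inv:
  assumes "invertible (K :: 'n::finite cmat)" "c \<noteq> 0"
  shows "invertible (csc (1/c) K) \<and> matrix_inv (csc (1/c) K) = csc c (matrix_inv K)"
proof -
  have K: "K ** matrix_inv K = mat 1 \<and> matrix_inv K ** K = mat 1"
    using assms(1) unfolding invertible_def matrix_inv_def by (rule someI_ex)
  have "csc (1/c) K ** csc c (matrix_inv K) = mat 1" "csc c (matrix_inv K) ** csc (1/c) K = mat 1"
    using K assms(2) by (simp_all add: csc_mult)
  then show ?thesis using matrix_inv_eqI unfolding invertible_def by blast
qed

lemma ppoint_csc:
  assumes "c \<noteq> 0" shows "ppoint (csc c X) = ppoint X"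
proof -
  have "{csc d (csc c X) | d. True} = {csc d X | d. True}"
  proof (intro equalityI subsetI)
    fix Y assume "Y \<in> {csc d X | d. True}"
    then obtain d where "Y = csc d X" by blast
    then have "Y = csc (d / c) (csc c X)" using assms by simp
    then show "Y \<in> {csc d (csc c X) | d. True}" by blast
  qed auto
  then show ?thesis by (simp add: ppoint_def)
qed

lemma ppoint_eqD:
  assumes "ppoint X = ppoint Y" "Y \<noteq> 0"
  shows "\<exists>c. c \<noteq> 0 \<and> Y = csc c X"
proof -
  have "Y \<in> ppoint Y" unfolding ppoint_def by (rule CollectI, rule exI[of _ 1]) simp
  then obtain c where "Y = csc c X" using assms(1) unfolding ppoint_def by auto
  then show ?thesis using assms(2) by auto
qed

lemma on_line_lincomb:
  assumes "on_line A l" "on_line B l" shows "on_line (csc a A + csc b B) l"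
proof -
  obtain a1 b1 a2 b2 where "A = csc a1 (fst l) + csc b1 (snd l)" "B = csc a2 (fst l) + csc b2 (snd l)"
    using assms unfolding on_line_def by blast
  then have "csc a A + csc b B = csc (a * a1 + b * a2) (fst l) + csc (a * b1 + b * b2) (snd l)"
    by (simp add: cmat_eq_iff algebra_simps)
  then show ?thesis unfolding on_line_def by blast
qed

lemma on_line_csc: "on_line X l \<Longrightarrow> on_line (csc c X) l"
  using on_line_lincomb[of X l X c 0] by simp

lemma polyfuns_minor3_line:
  "(\<lambda>l. minor3 (fst l) (snd l) X \<alpha> \<beta> \<gamma>) \<in> polyfuns pcoords"
  unfolding minor3_def minor2_def entry_def
  by (intro pf_add polyfuns_diff pf_mult pf_const pcoord_fst pcoord_snd)

lemma polyfuns_minor3_incidence: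
  "(\<lambda>t. minor3 (fst (snd (snd t))) (snd (snd (snd t))) (fst t) \<alpha> \<beta> \<gamma>) \<in> polyfuns tcoords"
  unfolding minor3_def minor2_def entry_def
  by (intro pf_add polyfuns_diff pf_mult pf_const tcoord_1 tcoord_3 tcoord_4)

section \<open>The reciprocal variety and the incidence correspondence\<close>

definition inverses :: "'n::finite cmat set \<Rightarrow> 'n cmat set" where
  "inverses L = {matrix_inv K | K. K \<in> L \<and> invertible K}"

lemma reciprocal_eq: "reciprocal L = zclosure mcoords Sym (inverses L)"
  by (simp only: reciprocal_def inverses_def)

lemma reciprocal_Sym: "X \<in> reciprocal L \<Longrightarrow> X \<in> Sym"
  unfolding reciprocal_eq by (rule subsetD[OF zclosure_subset])

lemma inverses_cone:
  assumes L: "\<And>K c. K \<in> L \<Longrightarrow> csc c K \<in> L" and Y: "Y \<in> inverses L" and c: "c \<noteq> 0"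
  shows "csc c Y \<in> inverses L"
proof -
  obtain K where K: "Y = matrix_inv K" "K \<in> L" "invertible K" using Y unfolding inverses_def by blast
  note inv = invertible_csc_matrix_inv[OF K(3) c]
  have "csc c Y = matrix_inv (csc (1/c) K)" using conjunct2[OF inv] K(1) by (simp only:)
  then show ?thesis unfolding inverses_def using L[OF K(2)] conjunct1[OF inv] by blast
qed

lemma reciprocal_cone:
  assumes L: "\<And>K c. K \<in> L \<Longrightarrow> csc c K \<in> L" and X: "X \<in> reciprocal L" and c: "c \<noteq> 0"
  shows "csc c X \<in> reciprocal L"
  unfolding reciprocal_eq zclosure_iff
proof (intro conjI ballI impI)
  show "csc c X \<in> Sym" using reciprocal_Sym[OF X] by (rule Sym_csc)
next
  fix g assume g: "g \<in> polyfuns mcoords" "\<forall>a\<in>inverses L. g a = 0"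
  have pf: "(\<lambda>Y. g (csc c Y)) \<in> polyfuns mcoords"
    using g(1) by (rule polyfuns_compose_mcoords) (simp add: pf_mult pf_const mcoord)
  have "g (csc c a) = 0" if "a \<in> inverses L" for a
    using g(2) inverses_cone[OF L that c] by simp
  then show "g (csc c X) = 0" by (rule zclosure_vanishing[OF X[unfolded reciprocal_eq] pf])
qed

lemma reciprocal_equation:
  assumes "X \<in> Sym" "X \<notin> reciprocal L"
  shows "\<exists>f\<in>polyfuns mcoords. (\<forall>Y\<in>reciprocal L. f Y = 0) \<and> f X \<noteq> 0"
proof -
  obtain f where f: "f \<in> polyfuns mcoords" "\<forall>a\<in>inverses L. f a = 0" "f X \<noteq> 0"
    using assms unfolding reciprocal_eq zclosure_iff by blast
  have "f Y = 0" if "Y \<in> reciprocal L" for Y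
    using zclosure_vanishing[OF that[unfolded reciprocal_eq] f(1)] f(2) by blast
  then show ?thesis using f by blast
qed

definition ml_points :: "'n::finite cmat set \<Rightarrow> 'n cmat \<Rightarrow> 'n cmat set" where
  "ml_points L X = reciprocal L \<inter> {G + X | G. G \<in> perp L}"

lemma ml_degree_equation:
  assumes "ml_degree L d"
  shows "\<exists>f0\<in>polyfuns mcoords. (\<exists>W\<in>Sym. f0 W \<noteq> 0) \<and>
    (\<forall>X\<in>Sym. f0 X \<noteq> 0 \<longrightarrow> finite (ml_points L X) \<and> card (ml_points L X) = d)"
proof -
  obtain U where U: "zopen_in mcoords Sym U" "U \<noteq> {}"
    "\<forall>X\<in>U. finite (ml_points L X) \<and> card (ml_points L X) = d"
    using assms unfolding ml_degree_def ml_points_def by blast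
  obtain W where "W \<in> U" using U(2) by blast
  moreover have "W \<in> Sym" using U(1) \<open>W \<in> U\<close> by (auto simp: zopen_in_def)
  ultimately show ?thesis using zopen_in_nonvanishing[OF U(1)] U(3) by blast
qed

lemma incidence_vanishing:
  assumes "(S, G, l) \<in> incidence L" "g \<in> polyfuns tcoords"
    and "\<And>S' G' l'. (S', G', l') \<in> incidence0 L \<Longrightarrow> g (S', G', l') = 0"
  shows "g (S, G, l) = 0"
  using assms(1)[unfolded incidence_def] assms(2)
proof (rule zclosure_vanishing)
  fix t assume "t \<in> incidence0 L"
  then show "g t = 0" using assms(3) by (cases t) auto
qed

lemma incidence_Amb3:
  assumes "(S, G, l) \<in> incidence L" shows "S \<in> Sym \<and> S \<noteq> 0 \<and> G \<in> Sym \<and> G \<noteq> 0 \<and> l \<in> IndepPairs"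
proof -
  have "(S, G, l) \<in> Amb3" using assms unfolding incidence_def by (rule subsetD[OF zclosure_subset])
  then show ?thesis by (simp add: Amb3_def)
qed

lemma incidence_reciprocal:
  assumes T: "(S, G, l) \<in> incidence L" shows "S \<in> reciprocal L"
  unfolding reciprocal_eq zclosure_iff
proof (intro conjI ballI impI)
  show "S \<in> Sym" using incidence_Amb3[OF T] by blast
  fix g assume g: "g \<in> polyfuns mcoords" "\<forall>a\<in>inverses L. g a = 0"
  have "(\<lambda>t. g (fst t)) \<in> polyfuns tcoords" using g(1) by (rule polyfuns_compose_mcoords) (rule tcoord_1)
  then have "(\<lambda>t. g (fst t)) (S, G, l) = 0"
  proof (rule incidence_vanishing[OF T])
    fix S' G' l' assume "(S', G', l') \<in> incidence0 L"
    then have "S' \<in> zclosure mcoords Sym (inverses L)" by (simp add: incidence0_def reciprocal_eq)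
    from zclosure_vanishing[OF this g(1)] show "g (fst (S', G', l')) = 0" using g(2) by simp
  qed
  then show "g S = 0" by simp
qed

lemma incidence_perp:
  assumes T: "(S, G, l) \<in> incidence L" shows "G \<in> perp L"
  unfolding perp_def
proof (intro CollectI conjI ballI)
  show "G \<in> Sym" using incidence_Amb3[OF T] by blast
  fix K assume K: "K \<in> L"
  have "(\<lambda>t. trace (K ** fst (snd t))) \<in> polyfuns tcoords"
    unfolding trace_mult_eq by (intro polyfuns_sum pf_mult pf_const tcoord_2) auto
  then have "(\<lambda>t. trace (K ** fst (snd t))) (S, G, l) = 0"
  proof (rule incidence_vanishing[OF T])
    fix S' G' l' assume "(S', G', l') \<in> incidence0 L"
    then have "G' \<in> perp L" by (simp add: incidence0_def)
    then show "trace (K ** fst (snd (S', G', l'))) = 0" using K by (simp add: perp_def)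
  qed
  then show "trace (K ** G) = 0" by simp
qed

lemma incidence_on_line:
  assumes T: "(S, G, (u, v)) \<in> incidence L" shows "on_line S (u, v)"
proof -
  have "minor3 u v S \<alpha> \<beta> \<gamma> = 0" for \<alpha> \<beta> \<gamma>
  proof -
    have "(\<lambda>t. minor3 (fst (snd (snd t))) (snd (snd (snd t))) (fst t) \<alpha> \<beta> \<gamma>) (S, G, (u, v)) = 0"
    proof (rule incidence_vanishing[OF T polyfuns_minor3_incidence])
      fix S' G' l' assume a: "(S', G', l') \<in> incidence0 L"
      obtain u' v' where l': "l' = (u', v')" by (cases l')
      have "on_line S' (u', v')" "indep2 u' v'" using a l' by (auto simp: incidence0_def IndepPairs_def)
      then have "\<forall>\<alpha> \<beta> \<gamma>. minor3 u' v' S' \<alpha> \<beta> \<gamma> = 0" using on_line_iff_minor3 by blast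
      then show "minor3 (fst (snd (snd (S', G', l')))) (snd (snd (snd (S', G', l')))) (fst (S', G', l')) \<alpha> \<beta> \<gamma> = 0"
        unfolding l' fst_conv snd_conv by blast
    qed
    then show ?thesis by simp
  qed
  moreover have "indep2 u v" using incidence_Amb3[OF T] by (simp add: IndepPairs_def)
  ultimately show ?thesis using on_line_iff_minor3 by blast
qed

lemma incidence0_Amb3: "incidence0 L \<subseteq> Amb3"
  by (auto simp: incidence0_def Amb3_def perp_def dest: reciprocal_Sym)

section \<open>Lines through the normal of a hyperplane\<close>

definition symm :: "'n::finite cmat \<Rightarrow> 'n cmat" where
  "symm W = csc (1/2) (W + transpose W)"

lemma symm_entry: "symm W $ i $ j = (W $ i $ j + W $ j $ i) / 2"
  by (simp add: symm_def transpose_def)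

lemma symm_Sym: "symm W \<in> Sym"
  by (simp add: Sym_iff symm_entry add.commute)

lemma symm_id: "W \<in> Sym \<Longrightarrow> symm W = W"
  by (simp add: cmat_eq_iff symm_entry Sym_iff)

type_synonym 'n pencil_params = "'n cmat \<times> complex \<times> complex \<times> complex \<times> complex"

fun param_segment :: "'n::finite pencil_params \<Rightarrow> 'n pencil_params \<Rightarrow> complex \<Rightarrow> 'n pencil_params" where
  "param_segment (W1, a1, b1, c1, e1) (W2, a2, b2, c2, e2) z =
     (W1 + csc z (W2 - W1), a1 + z * (a2 - a1), b1 + z * (b2 - b1), c1 + z * (c2 - c1), e1 + z * (e2 - e1))"

lemma param_segment_0: "param_segment x y 0 = x"
  by (cases x; cases y) (simp add: cmat_eq_iff)

lemma param_segment_1: "param_segment x y 1 = y"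
  by (cases x; cases y) (simp add: cmat_eq_iff)

locale sym_hyperplane =
  fixes L :: "'n::finite cmat set" and \<Gamma> :: "'n cmat" and p q :: 'n
  assumes \<Gamma>_Sym: "\<Gamma> \<in> Sym" and \<Gamma>_pq: "\<Gamma> $ p $ q \<noteq> 0"
    and L_eq: "L = {K\<in>Sym. trace (K ** \<Gamma>) = 0}"
begin

lemma \<Gamma>_nonzero: "\<Gamma> \<noteq> 0"
  using \<Gamma>_pq by auto

lemma perp_iff: "G \<in> perp L \<longleftrightarrow> (\<exists>c. G = csc c \<Gamma>)"
  using perp_trace_hyperplane[OF \<Gamma>_Sym \<Gamma>_nonzero] L_eq by auto

text \<open>A linear functional normalised on \<open>\<Gamma>\<close>: every matrix is an element of its kernel plus
  a multiple of \<open>\<Gamma>\<close>.\<close>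
definition gcoord :: "'n cmat \<Rightarrow> complex" where
  "gcoord X = X $ p $ q / \<Gamma> $ p $ q"

lemma gcoord_add [simp]: "gcoord (A + B) = gcoord A + gcoord B"
  by (simp add: gcoord_def add_divide_distrib)

lemma gcoord_csc [simp]: "gcoord (csc c A) = c * gcoord A"
  by (simp add: gcoord_def)

lemma gcoord_\<Gamma> [simp]: "gcoord \<Gamma> = 1"
  using \<Gamma>_pq by (simp add: gcoord_def)

lemma polyfuns_gcoord:
  assumes "\<And>i j. (\<lambda>x. h x $ i $ j) \<in> polyfuns C" shows "(\<lambda>x. gcoord (h x)) \<in> polyfuns C"
  using pf_mult[OF assms pf_const[of "1 / \<Gamma> $ p $ q"]] by (simp add: gcoord_def)

text \<open>The point where the line through \<open>u\<close> and \<open>v\<close> meets the kernel of \<^const>\<open>gcoord\<close>.\<close>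
definition line_ker :: "'n cmat \<Rightarrow> 'n cmat \<Rightarrow> 'n cmat" where
  "line_ker u v = csc (gcoord v) u + csc (- gcoord u) v"

lemma gcoord_line_ker [simp]: "gcoord (line_ker u v) = 0"
  by (simp add: line_ker_def algebra_simps)

lemma line_ker_Sym: "u \<in> Sym \<Longrightarrow> v \<in> Sym \<Longrightarrow> line_ker u v \<in> Sym"
  by (simp add: line_ker_def Sym_add Sym_csc)

lemma on_line_line_ker: "on_line (line_ker u v) (u, v)"
  unfolding line_ker_def on_line_def by auto

lemma line_ker_\<Gamma>: "line_ker W \<Gamma> = W + csc (- gcoord W) \<Gamma>"
  by (simp add: line_ker_def)

lemma polyfuns_line_ker:
  assumes "\<And>i j. (\<lambda>x. u x $ i $ j) \<in> polyfuns C" "\<And>i j. (\<lambda>x. v x $ i $ j) \<in> polyfuns C"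
  shows "(\<lambda>x. line_ker (u x) (v x) $ i $ j) \<in> polyfuns C"
proof -
  have "(\<lambda>x. gcoord (v x) * u x $ i $ j - gcoord (u x) * v x $ i $ j) \<in> polyfuns C"
    using assms by (intro polyfuns_diff pf_mult polyfuns_gcoord)
  then show ?thesis by (simp add: line_ker_def)
qed

lemma kernel_plus_\<Gamma>_not_multiple:
  assumes "gcoord W = 0" "W \<noteq> 0" "\<sigma> \<noteq> 0"
  shows "csc \<sigma> W + csc \<tau> \<Gamma> \<noteq> csc a \<Gamma>"
proof
  assume "csc \<sigma> W + csc \<tau> \<Gamma> = csc a \<Gamma>"
  then have eq: "csc \<sigma> W = csc (a - \<tau>) \<Gamma>" by (simp add: cmat_eq_iff algebra_simps)
  then have "gcoord (csc \<sigma> W) = gcoord (csc (a - \<tau>) \<Gamma>)" by (rule arg_cong)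
  then have "a - \<tau> = 0" using assms(1) by simp
  then show False using eq assms(2,3) by simp
qed

context
  fixes u v :: "'n cmat"
  assumes indep: "indep2 u v" and \<Gamma>_on: "on_line \<Gamma> (u, v)"
begin

lemma gcoord_line_nonzero: "gcoord u \<noteq> 0 \<or> gcoord v \<noteq> 0"
proof -
  obtain a b where "\<Gamma> = csc a u + csc b v" using \<Gamma>_on by (auto simp: on_line_def)
  then have "gcoord \<Gamma> = gcoord (csc a u + csc b v)" by (rule arg_cong)
  then have "1 = a * gcoord u + b * gcoord v" by simp
  then show ?thesis by auto
qed

lemma line_ker_nonzero: "line_ker u v \<noteq> 0"
proof
  assume "line_ker u v = 0"
  then have "gcoord v = 0 \<and> - gcoord u = 0" using indep unfolding indep2_def line_ker_def by blast
  then show False using gcoord_line_nonzero by simp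
qed

lemma on_line_decomp:
  assumes "on_line X (u, v)"
  shows "\<exists>\<sigma>. X = csc \<sigma> (line_ker u v) + csc (gcoord X) \<Gamma>"
proof -
  obtain a b where X: "X = csc a u + csc b v" using assms by (auto simp: on_line_def)
  obtain \<alpha> \<beta> where G: "\<Gamma> = csc \<alpha> u + csc \<beta> v" using \<Gamma>_on by (auto simp: on_line_def)
  define t where "t = gcoord X"
  define c1 where "c1 = a - t * \<alpha>"
  define c2 where "c2 = b - t * \<beta>"
  have Y: "X = csc c1 u + csc c2 v + csc t \<Gamma>"
    unfolding c1_def c2_def cmat_eq_iff by (simp add: X G algebra_simps)
  then have "gcoord X = gcoord (csc c1 u + csc c2 v + csc t \<Gamma>)" by (rule arg_cong)
  then have ker: "c1 * gcoord u + c2 * gcoord v = 0" by (simp add: t_def)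
  obtain \<sigma> where \<sigma>: "csc c1 u + csc c2 v = csc \<sigma> (line_ker u v)"
  proof (cases "gcoord v = 0")
    case True
    then have "gcoord u \<noteq> 0" "c1 = 0" using gcoord_line_nonzero ker by auto
    then have "csc c1 u + csc c2 v = csc (- c2 / gcoord u) (line_ker u v)"
      using True by (simp add: line_ker_def cmat_eq_iff)
    then show thesis using that by blast
  next
    case False
    have "c2 * gcoord v = - (c1 * gcoord u)" using ker by (simp add: eq_neg_iff_add_eq_0 add.commute)
    then have "c2 = - (c1 * gcoord u) / gcoord v" using False by (simp add: field_simps)
    then have "csc c1 u + csc c2 v = csc (c1 / gcoord v) (line_ker u v)"
      using False by (simp add: line_ker_def cmat_eq_iff algebra_simps)
    then show thesis using that by blast
  qed
  have "X = csc \<sigma> (line_ker u v) + csc t \<Gamma>" using Y by (simp only: \<sigma>)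
  then show ?thesis unfolding t_def by blast
qed

end

lemma L_csc: "K \<in> L \<Longrightarrow> csc c K \<in> L"
  using L_eq by (simp add: Sym_csc trace_csc_left)

definition \<Gamma>_lines :: "('n cmat \<times> 'n cmat) set" where
  "\<Gamma>_lines = {l \<in> IndepPairs. on_line \<Gamma> l}"

lemma \<Gamma>_linesD:
  assumes "(u, v) \<in> \<Gamma>_lines" shows "u \<in> Sym" "v \<in> Sym" "indep2 u v" "on_line \<Gamma> (u, v)"
  using assms by (auto simp: \<Gamma>_lines_def IndepPairs_def)

lemma incidence0_D:
  assumes "(S, G, (u, v)) \<in> incidence0 L"
  shows "(u, v) \<in> \<Gamma>_lines" "S \<in> reciprocal L" "on_line S (u, v)" "\<exists>c. c \<noteq> 0 \<and> G = csc c \<Gamma>"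
    "\<exists>\<sigma>. \<sigma> \<noteq> 0 \<and> S = csc \<sigma> (line_ker u v) + csc (gcoord S) \<Gamma>"
proof -
  have S: "S \<in> reciprocal L" "S \<noteq> 0" "ppoint S \<noteq> ppoint G" "on_line S (u, v)"
    and G: "G \<in> perp L" "G \<noteq> 0" "on_line G (u, v)" and l: "(u, v) \<in> IndepPairs"
    using assms by (auto simp: incidence0_def)
  obtain c where c: "G = csc c \<Gamma>" using G(1) perp_iff by blast
  then have "c \<noteq> 0" using G(2) by auto
  then show "\<exists>c. c \<noteq> 0 \<and> G = csc c \<Gamma>" using c by blast
  have "on_line \<Gamma> (u, v)" using on_line_csc[OF G(3), of "1/c"] c \<open>c \<noteq> 0\<close> by simp
  then show \<Gamma>_line: "(u, v) \<in> \<Gamma>_lines" using l by (simp add: \<Gamma>_lines_def)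
  show "S \<in> reciprocal L" "on_line S (u, v)" using S by auto
  define t where "t = gcoord S"
  obtain \<sigma> where \<sigma>: "S = csc \<sigma> (line_ker u v) + csc t \<Gamma>"
    using on_line_decomp \<Gamma>_linesD[OF \<Gamma>_line] S(4) unfolding t_def by blast
  have "\<sigma> \<noteq> 0"
  proof
    assume "\<sigma> = 0"
    then have S\<Gamma>: "S = csc t \<Gamma>" using \<sigma> by simp
    then have "t \<noteq> 0" using S(2) by auto
    then have "ppoint S = ppoint G" unfolding S\<Gamma> c using \<open>c \<noteq> 0\<close> by (simp add: ppoint_csc)
    then show False using S(3) by simp
  qed
  then show "\<exists>\<sigma>. \<sigma> \<noteq> 0 \<and> S = csc \<sigma> (line_ker u v) + csc (gcoord S) \<Gamma>" using \<sigma> unfolding t_def by blast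
qed

text \<open>Lines through \<open>\<Gamma>\<close> are cut out by the \<open>3 \<times> 3\<close> minors of \<open>(u, v, \<Gamma>)\<close>.\<close>
lemma zclosure_subset_\<Gamma>_lines:
  assumes "A \<subseteq> \<Gamma>_lines" shows "zclosure pcoords IndepPairs A \<subseteq> \<Gamma>_lines"
proof
  fix l assume l: "l \<in> zclosure pcoords IndepPairs A"
  obtain u v where l_eq: "l = (u, v)" by (cases l)
  have lI: "(u, v) \<in> IndepPairs" using l unfolding l_eq by (rule subsetD[OF zclosure_subset])
  have "minor3 u v \<Gamma> \<alpha> \<beta> \<gamma> = 0" for \<alpha> \<beta> \<gamma>
  proof -
    have "minor3 (fst l) (snd l) \<Gamma> \<alpha> \<beta> \<gamma> = 0"
    proof (rule zclosure_vanishing[OF l polyfuns_minor3_line])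
      fix l' assume "l' \<in> A"
      then have "l' \<in> \<Gamma>_lines" using assms by blast
      moreover obtain u' v' where l': "l' = (u', v')" by (cases l')
      ultimately have "indep2 u' v'" "on_line \<Gamma> (u', v')" by (auto dest: \<Gamma>_linesD)
      then show "minor3 (fst l') (snd l') \<Gamma> \<alpha> \<beta> \<gamma> = 0"
        unfolding l' fst_conv snd_conv using on_line_iff_minor3 by blast
    qed
    then show ?thesis by (simp add: l_eq)
  qed
  moreover have "indep2 u v" using lI by (simp add: IndepPairs_def)
  ultimately have "on_line \<Gamma> (u, v)" by (simp add: on_line_iff_minor3)
  then show "l \<in> \<Gamma>_lines" using lI by (simp add: \<Gamma>_lines_def l_eq)
qed

lemma ml_points_iff: "Y \<in> ml_points L X \<longleftrightarrow> Y \<in> reciprocal L \<and> (\<exists>c. Y = csc c \<Gamma> + X)"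
  by (auto simp: ml_points_def perp_iff)

lemma incidence_multiple_\<Gamma>:
  assumes "(S, G, l) \<in> incidence L" shows "\<exists>c. c \<noteq> 0 \<and> G = csc c \<Gamma>"
  using incidence_perp[OF assms] incidence_Amb3[OF assms] perp_iff by force

text \<open>For a line \<open>l\<close> through \<open>\<Gamma>\<close>, the affine line \<open>L\<^sup>\<perp> + line_offset l\<close> consists of the points
  of \<open>l\<close> whose \<^const>\<open>line_ker\<close>-component is \<open>1\<close>: one representative of each point of \<open>l\<close> other
  than \<open>\<Gamma>\<close>.\<close>
definition line_offset :: "'n cmat \<times> 'n cmat \<Rightarrow> 'n cmat" where
  "line_offset l = line_ker (fst l) (snd l) + csc (gcoord (fst l)) \<Gamma>"

lemma line_offset_Sym: "(u, v) \<in> \<Gamma>_lines \<Longrightarrow> line_offset (u, v) \<in> Sym"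
  by (auto simp: line_offset_def \<Gamma>_lines_def IndepPairs_def intro!: Sym_add Sym_csc line_ker_Sym \<Gamma>_Sym)

lemma ml_point_line_offset:
  assumes "X \<in> ml_points L (line_offset (u, v))"
  shows "X \<in> reciprocal L" "\<exists>t. X = csc 1 (line_ker u v) + csc t \<Gamma>"
proof -
  obtain c where "X \<in> reciprocal L" and X: "X = csc c \<Gamma> + line_offset (u, v)"
    using assms ml_points_iff by blast
  then show "X \<in> reciprocal L" by simp
  show "\<exists>t. X = csc 1 (line_ker u v) + csc t \<Gamma>"
    by (rule exI[of _ "c + gcoord u"]) (simp add: X line_offset_def cmat_eq_iff algebra_simps)
qed

lemma incidence0_of_ml_point:
  assumes l: "(u, v) \<in> \<Gamma>_lines" and X: "X \<in> ml_points L (line_offset (u, v))"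
  shows "(X, \<Gamma>, (u, v)) \<in> incidence0 L"
proof -
  obtain t where Xt: "X = csc 1 (line_ker u v) + csc t \<Gamma>" using ml_point_line_offset(2)[OF X] by blast
  have W: "gcoord (line_ker u v) = 0" "line_ker u v \<noteq> 0"
    using line_ker_nonzero \<Gamma>_linesD[OF l] by auto
  have not_mult: "X \<noteq> csc a \<Gamma>" for a
    unfolding Xt by (rule kernel_plus_\<Gamma>_not_multiple[OF W]) simp
  then have "X \<noteq> 0" using not_mult[of 0] by simp
  moreover have "ppoint X \<noteq> ppoint \<Gamma>"
    using ppoint_eqD[of \<Gamma> X] not_mult \<open>X \<noteq> 0\<close> by metis
  moreover have "on_line X (u, v)"
    unfolding Xt by (rule on_line_lincomb[OF on_line_line_ker \<Gamma>_linesD(4)[OF l]])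
  moreover have "\<Gamma> \<in> perp L" using perp_iff[of \<Gamma>] by (metis csc_1)
  ultimately show ?thesis
    using ml_point_line_offset(1)[OF X] \<Gamma>_nonzero l \<Gamma>_linesD(4)[OF l]
    unfolding incidence0_def \<Gamma>_lines_def by blast
qed

lemma inj_on_ppoint_ml_points:
  assumes l: "(u, v) \<in> \<Gamma>_lines" shows "inj_on ppoint (ml_points L (line_offset (u, v)))"
proof (rule inj_onI)
  fix X1 X2 assume X1: "X1 \<in> ml_points L (line_offset (u, v))" and X2: "X2 \<in> ml_points L (line_offset (u, v))"
    and eq: "ppoint X1 = ppoint X2"
  define W where "W = line_ker u v"
  have W: "gcoord W = 0" "W \<noteq> 0" using line_ker_nonzero \<Gamma>_linesD[OF l] by (auto simp: W_def)
  obtain t1 t2 where t: "X1 = csc 1 W + csc t1 \<Gamma>" "X2 = csc 1 W + csc t2 \<Gamma>"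
    using ml_point_line_offset(2)[OF X1] ml_point_line_offset(2)[OF X2] unfolding W_def by blast
  have "X2 \<noteq> 0" using kernel_plus_\<Gamma>_not_multiple[OF W, of 1 t2 0] t(2) by simp
  then obtain k where k: "k \<noteq> 0" "X2 = csc k X1" using ppoint_eqD[OF eq] by blast
  then have "csc 1 W + csc t2 \<Gamma> = csc k W + csc (k * t1) \<Gamma>"
    using t by (simp add: cmat_eq_iff algebra_simps)
  then have "csc (1 - k) W = csc (k * t1 - t2) \<Gamma>" by (simp add: cmat_eq_iff algebra_simps)
  then have "gcoord (csc (1 - k) W) = gcoord (csc (k * t1 - t2) \<Gamma>)" by (rule arg_cong)
  then have "k * t1 - t2 = 0" using W(1) by simp
  then have "csc (1 - k) W = 0" using \<open>csc (1 - k) W = csc (k * t1 - t2) \<Gamma>\<close> by simp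
  then have "k = 1" using W(2) by simp
  then show "X1 = X2" using k by simp
qed

text \<open>A polynomial parametrisation of the lines through \<open>\<Gamma>\<close> by an affine space (symmetrising
  lets \<open>W\<close> range over all matrices).  Along segments of parameters every polynomial becomes
  univariate, so \<^const>\<open>\<Gamma>_lines\<close> behaves like an irreducible variety.\<close>
definition pencil_pair :: "'n pencil_params \<Rightarrow> 'n cmat \<times> 'n cmat" where
  "pencil_pair = (\<lambda>(W, a, b, c, e). (csc a (symm W) + csc b \<Gamma>, csc c (symm W) + csc e \<Gamma>))"

lemma pencil_pair_base: "W \<in> Sym \<Longrightarrow> pencil_pair (W, 1, 0, 0, 1) = (W, \<Gamma>)"
  by (simp add: pencil_pair_def symm_id)

lemma pencil_pair_along_segment:
  assumes "g \<in> polyfuns pcoords"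
  shows "\<exists>P. \<forall>z. g (pencil_pair (param_segment x y z)) = poly P z"
proof (rule polyfuns_along_curve[OF assms])
  fix c :: "'n cmat \<times> 'n cmat \<Rightarrow> complex" assume "c \<in> pcoords"
  then consider (fst) i j where "c = (\<lambda>(u, v). u $ i $ j)" | (snd) i j where "c = (\<lambda>(u, v). v $ i $ j)"
    unfolding pcoords_def by blast
  note cases = this
  obtain W1 a1 b1 c1 e1 where x: "x = (W1, a1, b1, c1, e1)" by (cases x) auto
  obtain W2 a2 b2 c2 e2 where y: "y = (W2, a2, b2, c2, e2)" by (cases y) auto
  have symm_seg: "symm (W1 + csc z (W2 - W1)) $ i $ j = symm W1 $ i $ j + z * (symm W2 $ i $ j - symm W1 $ i $ j)"
    for z i j by (simp add: symm_entry algebra_simps add_divide_distrib diff_divide_distrib)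
  show "\<exists>P. \<forall>z. c (pencil_pair (param_segment x y z)) = poly P z"
    using cases
  proof cases
    case (fst i j)
    show ?thesis
      by (rule exI[of _ "[:a1, a2 - a1:] * [:symm W1 $ i $ j, symm W2 $ i $ j - symm W1 $ i $ j:] + [:b1, b2 - b1:] * [:\<Gamma> $ i $ j:]"])
         (simp add: fst x y pencil_pair_def symm_seg algebra_simps)
  next
    case (snd i j)
    show ?thesis
      by (rule exI[of _ "[:c1, c2 - c1:] * [:symm W1 $ i $ j, symm W2 $ i $ j - symm W1 $ i $ j:] + [:e1, e2 - e1:] * [:\<Gamma> $ i $ j:]"])
         (simp add: snd x y pencil_pair_def symm_seg algebra_simps)
  qed
qed

lemma pencil_pair_nonzero_product:
  assumes "g1 \<in> polyfuns pcoords" "g2 \<in> polyfuns pcoords" "g1 (pencil_pair x) \<noteq> 0" "g2 (pencil_pair y) \<noteq> 0"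
  shows "\<exists>z. g1 (pencil_pair z) \<noteq> 0 \<and> g2 (pencil_pair z) \<noteq> 0"
proof -
  have "\<exists>z. g1 (pencil_pair (param_segment x y z)) \<noteq> 0 \<and> g2 (pencil_pair (param_segment x y z)) \<noteq> 0"
  proof (rule polyfuns_along_curve_nonzero_product[OF assms(1,2), where a = 0 and b = 1])
    fix c :: "'n cmat \<times> 'n cmat \<Rightarrow> complex" assume "c \<in> pcoords"
    then show "\<exists>P. \<forall>z. c (pencil_pair (param_segment x y z)) = poly P z"
      by (rule pencil_pair_along_segment[OF pf_coord])
  qed (use assms(3,4) in \<open>simp_all add: param_segment_0 param_segment_1\<close>)
  then show ?thesis by blast
qed

lemma pencil_pair_in_\<Gamma>_lines:
  assumes indep: "indep2 (fst (pencil_pair x)) (snd (pencil_pair x))"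
  shows "pencil_pair x \<in> \<Gamma>_lines"
proof -
  obtain W a b c e where x: "x = (W, a, b, c, e)" by (cases x) auto
  define u where "u = csc a (symm W) + csc b \<Gamma>"
  define v where "v = csc c (symm W) + csc e \<Gamma>"
  have uv: "pencil_pair x = (u, v)" by (simp add: x pencil_pair_def u_def v_def)
  then have ind: "indep2 u v" using indep by simp
  have key: "csc c u + csc (- a) v = csc (c * b - a * e) \<Gamma>"
    by (simp add: u_def v_def cmat_eq_iff algebra_simps)
  have det: "c * b - a * e \<noteq> 0"
  proof
    assume "c * b - a * e = 0"
    then have "csc c u + csc (- a) v = 0" using key by simp
    then have ca: "c = 0 \<and> - a = 0" using ind unfolding indep2_def by blast
    then have "csc e u + csc (- b) v = 0" by (simp add: u_def v_def cmat_eq_iff algebra_simps)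
    then have "e = 0 \<and> - b = 0" using ind unfolding indep2_def by blast
    then have "u = 0" using ca by (simp add: u_def)
    then have "csc 1 u + csc 0 v = 0" by simp
    then show False using ind unfolding indep2_def by fastforce
  qed
  have "\<Gamma> = csc (c / (c * b - a * e)) u + csc (- a / (c * b - a * e)) v"
    using arg_cong[OF key, of "csc (1 / (c * b - a * e))"] det by (simp add: csc_add)
  then have "on_line \<Gamma> (u, v)" unfolding on_line_def by auto
  moreover have "u \<in> Sym" "v \<in> Sym" unfolding u_def v_def using \<Gamma>_Sym symm_Sym by (auto intro!: Sym_add Sym_csc)
  ultimately show ?thesis using ind uv by (simp add: \<Gamma>_lines_def IndepPairs_def)
qed

lemma pencil_pair_onto:
  assumes "l \<in> \<Gamma>_lines" shows "\<exists>x. pencil_pair x = l"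
proof -
  obtain u v where l: "l = (u, v)" by (cases l)
  have uv: "u \<in> Sym" "v \<in> Sym" using assms \<Gamma>_linesD by (auto simp: l)
  obtain \<alpha> \<beta> where G: "\<Gamma> = csc \<alpha> u + csc \<beta> v"
    using \<Gamma>_linesD(4)[OF assms[unfolded l]] by (auto simp: on_line_def)
  show ?thesis
  proof (cases "\<alpha> = 0")
    case False
    have "u = csc (- \<beta> / \<alpha>) v + csc (1 / \<alpha>) \<Gamma>"
      using False by (simp add: G cmat_eq_iff field_simps)
    then have "pencil_pair (v, - \<beta> / \<alpha>, 1 / \<alpha>, 1, 0) = (u, v)" using uv by (simp add: pencil_pair_def symm_id)
    then show ?thesis using l by blast
  next
    case True
    then have "\<beta> \<noteq> 0" using G \<Gamma>_nonzero by auto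
    have "v = csc 0 u + csc (1 / \<beta>) \<Gamma>"
      using True \<open>\<beta> \<noteq> 0\<close> by (simp add: G cmat_eq_iff field_simps)
    then have "pencil_pair (u, 1, 0, 0, 1 / \<beta>) = (u, v)" using uv by (simp add: pencil_pair_def symm_id)
    then show ?thesis using l by blast
  qed
qed

text \<open>The minor \<open>(p, q), (i, i)\<close> with \<open>i \<noteq> p\<close> is a polynomial that is non-zero at \<open>(sym_unit i i, \<Gamma>)\<close>
  and forces independence; this is where \<open>n \<ge> 2\<close> enters.\<close>
lemma \<Gamma>_lines_nonzero_product:
  assumes i: "i \<noteq> p"
    and h: "h \<in> polyfuns pcoords" "h (pencil_pair x) \<noteq> 0"
    and g: "g \<in> polyfuns pcoords" "l \<in> \<Gamma>_lines" "g l \<noteq> 0"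
  shows "\<exists>l'\<in>\<Gamma>_lines. g l' \<noteq> 0 \<and> h l' \<noteq> 0"
proof -
  define m where "m l = minor2 (fst l) (snd l) (p, q) (i, i)" for l :: "'n cmat \<times> 'n cmat"
  have m: "m \<in> polyfuns pcoords"
    unfolding m_def[abs_def] minor2_def entry_def by (intro polyfuns_diff pf_mult pcoord_fst pcoord_snd)
  have "m (pencil_pair (sym_unit i i, 1, 0, 0, 1)) \<noteq> 0"
    using i \<Gamma>_pq by (simp add: pencil_pair_base[OF sym_unit_Sym] m_def minor2_def entry_def sym_unit_entry)
  then obtain z1 where "m (pencil_pair z1) \<noteq> 0 \<and> h (pencil_pair z1) \<noteq> 0"
    using pencil_pair_nonzero_product[OF m h(1)] h(2) by blast
  then have mh: "(\<lambda>l. m l * h l) (pencil_pair z1) \<noteq> 0" by simp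
  obtain x1 where x1: "pencil_pair x1 = l" using pencil_pair_onto[OF g(2)] by blast
  have "g (pencil_pair x1) \<noteq> 0" using g(3) x1 by simp
  from pencil_pair_nonzero_product[OF g(1) pf_mult[OF m h(1)] this mh]
  obtain z where z: "g (pencil_pair z) \<noteq> 0" "m (pencil_pair z) * h (pencil_pair z) \<noteq> 0" by blast
  then have "pencil_pair z \<in> \<Gamma>_lines"
    by (intro pencil_pair_in_\<Gamma>_lines minor2_nonzero_indep2[of _ _ "(p, q)" "(i, i)"]) (simp add: m_def)
  then show ?thesis using z by auto
qed

lemma \<Gamma>_lines_subset_zclosure:
  assumes "\<exists>i. i \<noteq> p" "h \<in> polyfuns pcoords" "h (pencil_pair x) \<noteq> 0"
    and A: "\<And>l. l \<in> \<Gamma>_lines \<Longrightarrow> h l \<noteq> 0 \<Longrightarrow> l \<in> A"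
  shows "\<Gamma>_lines \<subseteq> zclosure pcoords IndepPairs A"
proof
  fix l assume l: "l \<in> \<Gamma>_lines"
  show "l \<in> zclosure pcoords IndepPairs A" unfolding zclosure_iff
  proof (intro conjI ballI impI)
    show "l \<in> IndepPairs" using l by (simp add: \<Gamma>_lines_def)
    fix g assume g: "g \<in> polyfuns pcoords" "\<forall>a\<in>A. g a = 0"
    show "g l = 0"
    proof (rule ccontr)
      assume "g l \<noteq> 0"
      then obtain l' where "l' \<in> \<Gamma>_lines" "g l' \<noteq> 0" "h l' \<noteq> 0"
        using \<Gamma>_lines_nonzero_product assms(1-3) g(1) l by blast
      then show False using A g(2) by blast
    qed
  qed
qed

lemma polyfuns_line_offset: "(\<lambda>l. line_offset l $ i $ j) \<in> polyfuns pcoords"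
proof -
  have "(\<lambda>l. line_ker (fst l) (snd l) $ i $ j + gcoord (fst l) * \<Gamma> $ i $ j) \<in> polyfuns pcoords"
    by (intro pf_add pf_mult pf_const polyfuns_line_ker polyfuns_gcoord pcoord_fst pcoord_snd)
  then show ?thesis by (simp add: line_offset_def)
qed

lemma line_offset_base: "W \<in> Sym \<Longrightarrow> line_offset (W, \<Gamma>) = W"
  by (simp add: line_offset_def line_ker_def cmat_eq_iff)

lemma reciprocal_proper:
  assumes "W \<in> Sym" "finite (ml_points L W)"
  shows "\<exists>X\<in>Sym. X \<notin> reciprocal L"
proof (rule ccontr)
  assume "\<not> ?thesis"
  then have "range (\<lambda>c. csc c \<Gamma> + W) \<subseteq> ml_points L W"
    using assms(1) \<Gamma>_Sym by (auto simp: ml_points_iff intro!: Sym_add Sym_csc)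
  moreover have "inj (\<lambda>c. csc c \<Gamma> + W)"
  proof (rule injI)
    fix c c' assume "csc c \<Gamma> + W = csc c' \<Gamma> + W"
    then have "(csc c \<Gamma> + W) $ p $ q = (csc c' \<Gamma> + W) $ p $ q" by simp
    then show "c = c'" using \<Gamma>_pq by simp
  qed
  ultimately have "finite (UNIV :: complex set)"
    using assms(2) finite_subset finite_imageD by blast
  then show False by (simp add: infinite_UNIV_char_0)
qed

lemma regular_index_ne:
  assumes "regular L" shows "\<exists>i. i \<noteq> p"
proof (rule ccontr)
  assume "\<nexists>i. i \<noteq> p"
  then have all: "\<And>i. i = p" by blast
  obtain K where K: "K \<in> L" "det K \<noteq> 0" using assms unfolding regular_def by blast
  have U: "(UNIV :: 'n set) = {p}" using all by auto
  have "trace (K ** \<Gamma>) = K $ p $ p * \<Gamma> $ p $ p" unfolding trace_mult_eq U by simp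
  then have "K $ p $ p = 0" using K(1) L_eq \<Gamma>_pq all[of q] by simp
  then have "K $ p $ i = 0" for i using all[of i] by simp
  then have "row p K = 0" by (simp add: row_def vec_eq_iff)
  then show False using K(2) det_zero_row(2) by blast
qed

end

section \<open>Generic fibres of \<open>\<gamma>\<close>\<close>

text \<open>\<open>f\<^sub>0\<close> is one of the equations cutting out the complement of the open set on which the ML degree
  count holds, and \<open>f\<close> is a non-zero equation of the reciprocal variety, expanded along the pencils
  \<open>\<sigma> W + \<tau> \<Gamma>\<close>.\<close>
locale ml_incidence = sym_hyperplane L \<Gamma> p q for L :: "'n::finite cmat set" and \<Gamma> p q +
  fixes d :: nat and f0 f :: "'n cmat \<Rightarrow> complex" and D :: nat and P :: "nat \<Rightarrow> 'n cmat \<Rightarrow> complex poly"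
  assumes d_nonzero: "d \<noteq> 0"
    and f0_polyfun: "f0 \<in> polyfuns mcoords"
    and f0_count: "\<And>X. X \<in> Sym \<Longrightarrow> f0 X \<noteq> 0 \<Longrightarrow> finite (ml_points L X) \<and> card (ml_points L X) = d"
    and f0_nonzero: "\<exists>W\<in>Sym. f0 W \<noteq> 0"
    and index_ne: "\<exists>i. i \<noteq> p"
    and f_reciprocal: "\<And>X. X \<in> reciprocal L \<Longrightarrow> f X = 0"
    and f_nonzero: "\<exists>X\<in>Sym. f X \<noteq> 0"
    and P_polyfun: "\<And>k j. (\<lambda>W. coeff (P k W) j) \<in> polyfuns mcoords"
    and P_zero: "\<And>k W. D < k \<Longrightarrow> P k W = 0"
    and f_expansion: "\<And>W \<sigma> \<tau>. f (csc \<sigma> W + csc \<tau> \<Gamma>) = (\<Sum>k\<le>D. poly (P k W) \<tau> * \<sigma> ^ k)"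
begin

text \<open>For \<open>k \<le> m\<close>, the coefficient of \<open>\<sigma>\<^sup>k \<tau>\<^sup>m\<^sup>-\<^sup>k\<close> in the degree \<open>m\<close> part of \<open>f (\<sigma> W + \<tau> \<Gamma>)\<close>.\<close>
definition hcoeff :: "nat \<Rightarrow> nat \<Rightarrow> 'n cmat \<Rightarrow> complex" where
  "hcoeff m k W = coeff (P k W) (m - k)"

lemma polyfuns_hcoeff: "hcoeff m k \<in> polyfuns mcoords"
  unfolding hcoeff_def[abs_def] by (rule P_polyfun)

text \<open>The reciprocal variety is a cone, so every homogeneous part of \<open>f\<close> vanishes on it.\<close>
lemma homogeneous_part_vanishes:
  assumes "csc \<sigma> W + csc \<tau> \<Gamma> \<in> reciprocal L"
  shows "(\<Sum>k\<le>m. hcoeff m k W * \<sigma> ^ k * \<tau> ^ (m - k)) = 0"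
proof -
  define Q where "Q = (\<Sum>k\<le>D. monom (\<sigma> ^ k) k * pcompose (P k W) [:0, \<tau>:])"
  have "poly Q c = f (csc c (csc \<sigma> W + csc \<tau> \<Gamma>))" for c
    by (simp add: Q_def f_expansion poly_sum poly_monom poly_pcompose csc_add power_mult_distrib algebra_simps)
  then have "poly Q c = 0" if "c \<noteq> 0" for c
    using f_reciprocal reciprocal_cone[OF L_csc assms that] by simp
  then have "UNIV - {0} \<subseteq> {c. poly Q c = 0}" by auto
  moreover have "infinite (UNIV - {0 :: complex})" by (simp add: infinite_UNIV_char_0)
  ultimately have "Q = 0" using poly_roots_finite finite_subset by blast
  have "coeff Q m = (\<Sum>k\<le>D. if m < k then 0 else hcoeff m k W * \<sigma> ^ k * \<tau> ^ (m - k))"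
    by (simp add: Q_def coeff_sum coeff_monom_mult coeff_pcompose_linear hcoeff_def algebra_simps cong: if_cong)
  also have "\<dots> = (\<Sum>k\<in>{..D} \<inter> {..m}. hcoeff m k W * \<sigma> ^ k * \<tau> ^ (m - k))"
    by (simp add: sum.If_cases not_less Int_def atMost_def)
  also have "\<dots> = (\<Sum>k\<le>m. hcoeff m k W * \<sigma> ^ k * \<tau> ^ (m - k))"
    by (rule sum.mono_neutral_left) (auto simp: hcoeff_def P_zero)
  finally show ?thesis using \<open>Q = 0\<close> by simp
qed

lemma hcoeff_nonzero_somewhere: "\<exists>m k W. k \<le> m \<and> W \<in> Sym \<and> gcoord W = 0 \<and> hcoeff m k W \<noteq> 0"
proof -
  obtain X where X: "X \<in> Sym" "f X \<noteq> 0" using f_nonzero by blast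
  define W where "W = line_ker X \<Gamma>"
  define t where "t = gcoord X"
  have W: "W \<in> Sym" "gcoord W = 0" using X(1) \<Gamma>_Sym by (simp_all add: W_def line_ker_Sym)
  have "X = csc 1 W + csc t \<Gamma>" by (simp add: W_def t_def line_ker_\<Gamma> cmat_eq_iff)
  then have "(\<Sum>k\<le>D. poly (P k W) t * 1 ^ k) \<noteq> 0" using X(2) f_expansion[of 1 W t] by simp
  then obtain k where "poly (P k W) t \<noteq> 0" by (rule sum.not_neutral_contains_not_neutral) simp
  then have "coeff (P k W) (degree (P k W)) \<noteq> 0" by auto
  then have "hcoeff (k + degree (P k W)) k W \<noteq> 0" by (simp add: hcoeff_def)
  then show ?thesis using W by (intro exI[of _ "k + degree (P k W)"] exI[of _ k] exI[of _ W]) simp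
qed

text \<open>A homogeneous part of \<open>f\<close> that does not vanish on all pencils, and the lowest power of \<open>\<sigma>\<close>
  occurring in it.\<close>
definition hdeg :: nat where
  "hdeg = (SOME m. \<exists>k W. k \<le> m \<and> W \<in> Sym \<and> gcoord W = 0 \<and> hcoeff m k W \<noteq> 0)"

definition hlow :: nat where
  "hlow = (LEAST k. \<exists>W. k \<le> hdeg \<and> W \<in> Sym \<and> gcoord W = 0 \<and> hcoeff hdeg k W \<noteq> 0)"

lemma hlow_spec: "hlow \<le> hdeg" "\<exists>W\<in>Sym. gcoord W = 0 \<and> hcoeff hdeg hlow W \<noteq> 0"
proof -
  have "\<exists>k W. k \<le> hdeg \<and> W \<in> Sym \<and> gcoord W = 0 \<and> hcoeff hdeg k W \<noteq> 0"
    unfolding hdeg_def by (rule someI_ex) (rule hcoeff_nonzero_somewhere)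
  then have "\<exists>W. hlow \<le> hdeg \<and> W \<in> Sym \<and> gcoord W = 0 \<and> hcoeff hdeg hlow W \<noteq> 0"
    unfolding hlow_def by (rule LeastI_ex)
  then show "hlow \<le> hdeg" "\<exists>W\<in>Sym. gcoord W = 0 \<and> hcoeff hdeg hlow W \<noteq> 0" by auto
qed

lemma hcoeff_below_hlow:
  assumes "k < hlow" "W \<in> Sym" "gcoord W = 0" shows "hcoeff hdeg k W = 0"
proof (rule ccontr)
  assume "hcoeff hdeg k W \<noteq> 0"
  moreover have "k \<le> hdeg" using assms(1) hlow_spec(1) by simp
  ultimately have "\<exists>W. k \<le> hdeg \<and> W \<in> Sym \<and> gcoord W = 0 \<and> hcoeff hdeg k W \<noteq> 0" using assms(2,3) by blast
  then have "hlow \<le> k" unfolding hlow_def by (rule Least_le)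
  then show False using assms(1) by simp
qed

text \<open>If \<open>S = \<sigma> W + \<tau> \<Gamma>\<close> with \<open>W = line_ker u v\<close>, then \<open>\<sigma>\<^sup>h\<^sup>l\<^sup>o\<^sup>w\<close> times this polynomial is
  \<open>W\<^sub>\<alpha>\<^sup>h\<^sup>d\<^sup>e\<^sup>g\<^sup>-\<^sup>h\<^sup>l\<^sup>o\<^sup>w\<close> times the homogeneous part of \<open>f\<close>, since \<open>\<sigma> W\<^sub>\<alpha> = S\<^sub>\<alpha> - \<tau> \<Gamma>\<^sub>\<alpha>\<close>.
  It therefore vanishes on the incidence correspondence, whereas at \<open>S = a \<Gamma>\<close> only the term
  \<open>k = hlow\<close> survives.\<close>
definition sep_poly :: "'n \<times> 'n \<Rightarrow> 'n cmat \<Rightarrow> 'n cmat \<Rightarrow> 'n cmat \<Rightarrow> complex" where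
  "sep_poly \<alpha> S u v = (\<Sum>k\<in>{hlow..hdeg}. (entry S \<alpha> - gcoord S * entry \<Gamma> \<alpha>) ^ (k - hlow) *
     entry (line_ker u v) \<alpha> ^ (hdeg - k) * gcoord S ^ (hdeg - k) * hcoeff hdeg k (line_ker u v))"

lemma sep_poly_vanishes:
  assumes S: "S \<in> reciprocal L" "S = csc \<sigma> (line_ker u v) + csc \<tau> \<Gamma>" "\<sigma> \<noteq> 0"
    and uv: "u \<in> Sym" "v \<in> Sym"
  shows "sep_poly \<alpha> S u v = 0"
proof -
  define W where "W = line_ker u v"
  define w where "w = entry W \<alpha>"
  have W: "W \<in> Sym" "gcoord W = 0" using uv by (simp_all add: W_def line_ker_Sym)
  have gS: "gcoord S = \<tau>" and eS: "entry S \<alpha> - \<tau> * entry \<Gamma> \<alpha> = \<sigma> * w"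
    using S(2) by (simp_all add: W_def w_def)
  have scaled_term: "\<sigma> ^ hlow * ((\<sigma> * w) ^ (k - hlow) * w ^ (hdeg - k) * \<tau> ^ (hdeg - k) * hcoeff hdeg k W)
      = w ^ (hdeg - hlow) * (hcoeff hdeg k W * \<sigma> ^ k * \<tau> ^ (hdeg - k))" if "k \<in> {hlow..hdeg}" for k
  proof -
    have "\<sigma> ^ k = \<sigma> ^ hlow * \<sigma> ^ (k - hlow)" "w ^ (hdeg - hlow) = w ^ (k - hlow) * w ^ (hdeg - k)"
      using that by (simp_all flip: power_add)
    then show ?thesis by (simp add: power_mult_distrib algebra_simps)
  qed
  have "\<sigma> ^ hlow * sep_poly \<alpha> S u v
      = (\<Sum>k\<in>{hlow..hdeg}. \<sigma> ^ hlow * ((\<sigma> * w) ^ (k - hlow) * w ^ (hdeg - k) * \<tau> ^ (hdeg - k) * hcoeff hdeg k W))"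
    unfolding sep_poly_def gS eS W_def[symmetric] w_def[symmetric] sum_distrib_left ..
  also have "\<dots> = w ^ (hdeg - hlow) * (\<Sum>k\<in>{hlow..hdeg}. hcoeff hdeg k W * \<sigma> ^ k * \<tau> ^ (hdeg - k))"
    unfolding sum_distrib_left by (rule sum.cong[OF refl scaled_term])
  also have "(\<Sum>k\<in>{hlow..hdeg}. hcoeff hdeg k W * \<sigma> ^ k * \<tau> ^ (hdeg - k)) = (\<Sum>k\<le>hdeg. hcoeff hdeg k W * \<sigma> ^ k * \<tau> ^ (hdeg - k))"
    by (rule sum.mono_neutral_left) (auto simp: hcoeff_below_hlow W)
  also have "\<dots> = 0"
  proof -
    have "csc \<sigma> W + csc \<tau> \<Gamma> \<in> reciprocal L" using S(1,2) by (simp add: W_def)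
    then show ?thesis by (rule homogeneous_part_vanishes)
  qed
  finally show ?thesis using S(3) by simp
qed

lemma sep_poly_multiple_\<Gamma>:
  "sep_poly \<alpha> (csc a \<Gamma>) u v = entry (line_ker u v) \<alpha> ^ (hdeg - hlow) * a ^ (hdeg - hlow) * hcoeff hdeg hlow (line_ker u v)"
proof -
  have "sep_poly \<alpha> (csc a \<Gamma>) u v = (\<Sum>k\<in>{hlow..hdeg}. if k = hlow then
      entry (line_ker u v) \<alpha> ^ (hdeg - hlow) * a ^ (hdeg - hlow) * hcoeff hdeg hlow (line_ker u v) else 0)"
    unfolding sep_poly_def by (intro sum.cong refl) (simp add: power_0_left)
  then show ?thesis using hlow_spec(1) by simp
qed

lemma polyfuns_sep_poly: "(\<lambda>t. sep_poly \<alpha> (fst t) (fst (snd (snd t))) (snd (snd (snd t)))) \<in> polyfuns tcoords"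
proof -
  have S: "(\<lambda>t. fst t $ i $ j) \<in> polyfuns tcoords" for i j :: 'n by (rule tcoord_1)
  have W: "(\<lambda>t. line_ker (fst (snd (snd t))) (snd (snd (snd t))) $ i $ j) \<in> polyfuns tcoords" for i j :: 'n
    by (rule polyfuns_line_ker) (rule tcoord_3, rule tcoord_4)
  show ?thesis unfolding sep_poly_def entry_def
    by (intro polyfuns_sum pf_mult polyfuns_power polyfuns_diff polyfuns_gcoord pf_const S W
        polyfuns_compose_mcoords[OF polyfuns_hcoeff]) simp
qed

lemma incidence_sep_poly:
  assumes "(S, G, (u, v)) \<in> incidence L" shows "sep_poly \<alpha> S u v = 0"
proof -
  have "(\<lambda>t. sep_poly \<alpha> (fst t) (fst (snd (snd t))) (snd (snd (snd t)))) (S, G, (u, v)) = 0"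
  proof (rule incidence_vanishing[OF assms polyfuns_sep_poly])
    fix S' G' l' assume a: "(S', G', l') \<in> incidence0 L"
    obtain u' v' where l': "l' = (u', v')" by (cases l')
    note D = incidence0_D[OF a[unfolded l']]
    obtain \<sigma> where \<sigma>: "\<sigma> \<noteq> 0" "S' = csc \<sigma> (line_ker u' v') + csc (gcoord S') \<Gamma>" using D(5) by blast
    have "sep_poly \<alpha> S' u' v' = 0"
      by (rule sep_poly_vanishes[OF D(2) \<sigma>(2) \<sigma>(1) \<Gamma>_linesD(1,2)[OF D(1)]])
    then show "sep_poly \<alpha> (fst (S', G', l')) (fst (snd (snd (S', G', l')))) (snd (snd (snd (S', G', l')))) = 0"
      by (simp add: l')
  qed
  then show ?thesis by simp
qed

definition incidence_lines :: "('n cmat \<times> 'n cmat) set" where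
  "incidence_lines = {l. \<exists>S G. (S, G, l) \<in> incidence0 L}"

lemma Jvar_eq: "Jvar L = zclosure pcoords IndepPairs incidence_lines"
  by (simp add: Jvar_def incidence_lines_def)

lemma incidence_lines_subset: "incidence_lines \<subseteq> \<Gamma>_lines"
  unfolding incidence_lines_def using incidence0_D(1) by auto

lemma in_incidence_lines:
  assumes l: "(u, v) \<in> \<Gamma>_lines" and f0: "f0 (line_offset (u, v)) \<noteq> 0"
  shows "(u, v) \<in> incidence_lines"
proof -
  have "finite (ml_points L (line_offset (u, v))) \<and> card (ml_points L (line_offset (u, v))) = d"
    using f0_count[OF line_offset_Sym[OF l] f0] .
  then obtain X where "X \<in> ml_points L (line_offset (u, v))" using d_nonzero by fastforce
  then have "(X, \<Gamma>, (u, v)) \<in> incidence0 L" by (rule incidence0_of_ml_point[OF l])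
  then show ?thesis unfolding incidence_lines_def by blast
qed

text \<open>This is where the closure in the definition of the incidence variety is controlled:
  by \<^const>\<open>sep_poly\<close>, no point of a generic fibre has \<open>S\<close> proportional to \<open>\<Gamma>\<close>.\<close>
lemma incidence_fibre_point:
  assumes l: "(u, v) \<in> \<Gamma>_lines" and h: "hcoeff hdeg hlow (line_ker u v) \<noteq> 0"
    and T: "(S, G, (u, v)) \<in> incidence L"
  shows "\<exists>X\<in>ml_points L (line_offset (u, v)). ppoint S = ppoint X \<and> ppoint G = ppoint \<Gamma>"
proof -
  obtain c where c: "c \<noteq> 0" "G = csc c \<Gamma>" using incidence_multiple_\<Gamma>[OF T] by blast
  define W where "W = line_ker u v"
  define t where "t = gcoord S"
  obtain \<sigma> where \<sigma>: "S = csc \<sigma> W + csc t \<Gamma>"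
    using on_line_decomp[OF \<Gamma>_linesD(3,4)[OF l] incidence_on_line[OF T]] unfolding W_def t_def by blast
  have "\<sigma> \<noteq> 0"
  proof
    assume "\<sigma> = 0"
    then have S: "S = csc t \<Gamma>" using \<sigma> by simp
    then have "t \<noteq> 0" using incidence_Amb3[OF T] by auto
    obtain \<alpha> where "entry W \<alpha> \<noteq> 0"
      using line_ker_nonzero[OF \<Gamma>_linesD(3,4)[OF l]] by (auto simp: W_def cmat_eq_entry_iff)
    then have "sep_poly \<alpha> S u v \<noteq> 0"
      using sep_poly_multiple_\<Gamma>[of \<alpha> t u v] h \<open>t \<noteq> 0\<close> unfolding S W_def by simp
    then show False using incidence_sep_poly[OF T] by simp
  qed
  define X where "X = csc (1 / \<sigma>) S"
  have "X \<in> reciprocal L" unfolding X_def using reciprocal_cone[OF L_csc incidence_reciprocal[OF T]] \<open>\<sigma> \<noteq> 0\<close> by simp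
  moreover have "X = csc (t / \<sigma> - gcoord u) \<Gamma> + line_offset (u, v)"
    using \<open>\<sigma> \<noteq> 0\<close> by (simp add: X_def \<sigma> W_def line_offset_def cmat_eq_iff field_simps)
  ultimately have "X \<in> ml_points L (line_offset (u, v))" unfolding ml_points_iff by blast
  moreover have "ppoint S = ppoint X" "ppoint G = ppoint \<Gamma>"
    using c \<open>\<sigma> \<noteq> 0\<close> by (simp_all add: X_def ppoint_csc)
  ultimately show ?thesis by blast
qed

lemma gamma_fibre_eq:
  assumes l: "(u, v) \<in> \<Gamma>_lines" and h: "hcoeff hdeg hlow (line_ker u v) \<noteq> 0"
  shows "gamma_fibre L (u, v) = (\<lambda>X. (ppoint X, ppoint \<Gamma>)) ` ml_points L (line_offset (u, v))"
proof (intro equalityI subsetI)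
  fix x assume "x \<in> gamma_fibre L (u, v)"
  then obtain S G where "x = (ppoint S, ppoint G)" "(S, G, (u, v)) \<in> incidence L"
    unfolding gamma_fibre_def by blast
  then show "x \<in> (\<lambda>X. (ppoint X, ppoint \<Gamma>)) ` ml_points L (line_offset (u, v))"
    using incidence_fibre_point[OF l h] by fastforce
next
  fix x assume "x \<in> (\<lambda>X. (ppoint X, ppoint \<Gamma>)) ` ml_points L (line_offset (u, v))"
  then obtain X where X: "X \<in> ml_points L (line_offset (u, v))" "x = (ppoint X, ppoint \<Gamma>)" by blast
  have "(X, \<Gamma>, (u, v)) \<in> incidence L"
    using incidence0_of_ml_point[OF l X(1)] zclosure_superset[OF incidence0_Amb3]
    unfolding incidence_def by blast
  then show "x \<in> gamma_fibre L (u, v)" unfolding gamma_fibre_def X(2) by blast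
qed

lemma gamma_fibre_card:
  assumes l: "(u, v) \<in> \<Gamma>_lines" and f0: "f0 (line_offset (u, v)) \<noteq> 0"
    and h: "hcoeff hdeg hlow (line_ker u v) \<noteq> 0"
  shows "finite (gamma_fibre L (u, v)) \<and> card (gamma_fibre L (u, v)) = d"
proof -
  have "finite (ml_points L (line_offset (u, v))) \<and> card (ml_points L (line_offset (u, v))) = d"
    using f0_count[OF line_offset_Sym[OF l] f0] .
  moreover have "inj_on (\<lambda>X. (ppoint X, ppoint \<Gamma>)) (ml_points L (line_offset (u, v)))"
    using inj_on_ppoint_ml_points[OF l] by (auto simp: inj_on_def)
  ultimately show ?thesis by (simp add: gamma_fibre_eq[OF l h] card_image)
qed

lemma polyfuns_f0_line_offset: "(\<lambda>l. f0 (line_offset l)) \<in> polyfuns pcoords"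
  using f0_polyfun by (rule polyfuns_compose_mcoords) (rule polyfuns_line_offset)

lemma polyfuns_hcoeff_line_ker: "(\<lambda>l. hcoeff hdeg hlow (line_ker (fst l) (snd l))) \<in> polyfuns pcoords"
  by (intro polyfuns_compose_mcoords[OF polyfuns_hcoeff] polyfuns_line_ker pcoord_fst pcoord_snd)

lemma Jvar_eq_\<Gamma>_lines: "Jvar L = \<Gamma>_lines"
proof
  show "Jvar L \<subseteq> \<Gamma>_lines"
    unfolding Jvar_eq by (rule zclosure_subset_\<Gamma>_lines[OF incidence_lines_subset])
  obtain W where W: "W \<in> Sym" "f0 W \<noteq> 0" using f0_nonzero by blast
  then have "f0 (line_offset (pencil_pair (W, 1, 0, 0, 1))) \<noteq> 0"
    by (simp add: pencil_pair_base line_offset_base)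
  then show "\<Gamma>_lines \<subseteq> Jvar L"
    unfolding Jvar_eq using in_incidence_lines
    by (intro \<Gamma>_lines_subset_zclosure[OF index_ne polyfuns_f0_line_offset]) (auto simp: split_beta)
qed

definition generic_fun :: "'n cmat \<times> 'n cmat \<Rightarrow> complex" where
  "generic_fun l = f0 (line_offset l) * hcoeff hdeg hlow (line_ker (fst l) (snd l))"

definition generic_lines :: "('n cmat \<times> 'n cmat) set" where
  "generic_lines = Jvar L - {l. generic_fun l = 0}"

lemma polyfuns_generic_fun: "generic_fun \<in> polyfuns pcoords"
  unfolding generic_fun_def[abs_def] by (rule pf_mult[OF polyfuns_f0_line_offset polyfuns_hcoeff_line_ker])

lemma generic_fun_nonzero: "\<exists>x. generic_fun (pencil_pair x) \<noteq> 0"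
proof -
  obtain W0 where W0: "W0 \<in> Sym" "f0 W0 \<noteq> 0" using f0_nonzero by blast
  obtain W1 where W1: "W1 \<in> Sym" "gcoord W1 = 0" "hcoeff hdeg hlow W1 \<noteq> 0" using hlow_spec(2) by blast
  have "f0 (line_offset (pencil_pair (W0, 1, 0, 0, 1))) \<noteq> 0"
    using W0 by (simp add: pencil_pair_base line_offset_base)
  moreover have "hcoeff hdeg hlow (line_ker (fst (pencil_pair (W1, 1, 0, 0, 1))) (snd (pencil_pair (W1, 1, 0, 0, 1)))) \<noteq> 0"
    using W1 by (simp add: pencil_pair_base line_ker_\<Gamma>)
  ultimately obtain z where "f0 (line_offset (pencil_pair z)) \<noteq> 0"
    "hcoeff hdeg hlow (line_ker (fst (pencil_pair z)) (snd (pencil_pair z))) \<noteq> 0"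
    using pencil_pair_nonzero_product[OF polyfuns_f0_line_offset polyfuns_hcoeff_line_ker] by blast
  then have "generic_fun (pencil_pair z) \<noteq> 0" by (simp add: generic_fun_def)
  then show ?thesis ..
qed

lemma zopen_generic_lines: "zopen_in pcoords (Jvar L) generic_lines"
  unfolding zopen_in_def generic_lines_def
  by (rule exI[of _ "{l. \<forall>g\<in>{generic_fun}. g l = 0}"]) (auto simp: zclosed_def polyfuns_generic_fun)

lemma zclosure_generic_lines: "zclosure pcoords IndepPairs generic_lines = Jvar L"
proof
  show "zclosure pcoords IndepPairs generic_lines \<subseteq> Jvar L"
    unfolding Jvar_eq by (rule zclosure_minimal) (auto simp: generic_lines_def Jvar_eq)
  obtain x where "generic_fun (pencil_pair x) \<noteq> 0" using generic_fun_nonzero by blast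
  then have "\<Gamma>_lines \<subseteq> zclosure pcoords IndepPairs generic_lines"
    by (rule \<Gamma>_lines_subset_zclosure[OF index_ne polyfuns_generic_fun])
       (simp add: generic_lines_def Jvar_eq_\<Gamma>_lines)
  then show "Jvar L \<subseteq> zclosure pcoords IndepPairs generic_lines" unfolding Jvar_eq_\<Gamma>_lines .
qed

lemma gamma_degree: "gamma_degree L d"
  unfolding gamma_degree_def
proof (intro exI[of _ generic_lines] conjI ballI)
  fix l assume "l \<in> generic_lines"
  then obtain u v where l: "l = (u, v)" "(u, v) \<in> \<Gamma>_lines" "generic_fun (u, v) \<noteq> 0"
    by (cases l) (auto simp: generic_lines_def Jvar_eq_\<Gamma>_lines)
  then show "finite (gamma_fibre L l)" "card (gamma_fibre L l) = d"
    using gamma_fibre_card[OF l(2)] by (auto simp: generic_fun_def)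
qed (simp_all add: zopen_generic_lines zclosure_generic_lines)

end

theorem proposition3p1:
  fixes L :: "'n::finite cmat set" and d :: nat
  assumes "is_hyperplane L" and "regular L"
    and "ml_degree L d" and "d \<noteq> 0"
  shows "gamma_degree L d"
proof -
  obtain \<Gamma> where \<Gamma>: "\<Gamma> \<in> Sym" "\<Gamma> \<noteq> 0" "L = {K\<in>Sym. trace (K ** \<Gamma>) = 0}"
    using hyperplane_normal[OF assms(1)] by blast
  obtain p q where "\<Gamma> $ p $ q \<noteq> 0" using \<Gamma>(2) by (auto simp: cmat_eq_iff)
  then interpret sym_hyperplane L \<Gamma> p q using \<Gamma> by unfold_locales
  obtain f0 where f0: "f0 \<in> polyfuns mcoords" "\<exists>W\<in>Sym. f0 W \<noteq> 0"
    "\<And>X. X \<in> Sym \<Longrightarrow> f0 X \<noteq> 0 \<Longrightarrow> finite (ml_points L X) \<and> card (ml_points L X) = d"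
    using ml_degree_equation[OF assms(3)] by blast
  obtain X where "X \<in> Sym" "X \<notin> reciprocal L" using reciprocal_proper f0(2,3) by blast
  then obtain f where f: "f \<in> polyfuns mcoords" "\<And>Y. Y \<in> reciprocal L \<Longrightarrow> f Y = 0" "\<exists>X\<in>Sym. f X \<noteq> 0"
    using reciprocal_equation by blast
  obtain D P where "\<forall>k j. (\<lambda>W. coeff (P k W) j) \<in> polyfuns mcoords" "\<forall>k W. D < k \<longrightarrow> P k W = 0"
    "\<forall>W \<sigma> \<tau>. f (csc \<sigma> W + csc \<tau> \<Gamma>) = (\<Sum>k\<le>D. poly (P k W) \<tau> * \<sigma> ^ k)"
    using polyfuns_pencil_expansion[OF f(1)] by blast
  then interpret ml_incidence L \<Gamma> p q d f0 f D P
    using assms(4) f0 f regular_index_ne[OF assms(2)] by unfold_locales blast+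
  show ?thesis by (rule gamma_degree)
qed

end
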